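(* Assume (H2) and additionally that $g$ is bounded, $\|g\|_\infty:=\sup_y|g(y)|<\infty$. Let $x\in\mathcal C^{p\text{-var}}([a,b],\mathbb R^m)$ and let $y$ be the solution on $[a,b]$ of $y_t=y_a+\int_a^t[Ay_s+f(y_s)]ds+\int_a^tg(y_s)dx_s$. Then $$\|y\|_{p\text{-var},[a,b]}\le\Big[\|y_a\|+\Big(\tfrac{\|f(0)\|}{L}\vee2\|g\|_\infty\Big)\big(1+|||x|||_{p\text{-var},[a,b]}\big)N_{[a,b]}(x)\Big]e^{2L(b-a)}N_{[a,b]}(x)^{\frac{p-1}{p}}.$$
   Context: Fix $d,m\ge1$ and $p\in(1,2)$. For a path $x:[a,b]\to\mathbb R^r$: $|||x|||_{p\text{-var},[a,b]}=\big(\sup_{\Pi}\sum_i\|x_{t_{i+1}}-x_{t_i}\|^p\big)^{1/p}$ over finite partitions of $[a,b]$; $\|x\|_{p\text{-var},[a,b]}=\|x_a\|+|||x|||_{p\text{-var},[a,b]}$. Integrals against $dx$ are Young integrals. $A\in\mathbb R^{d\times d}$ with operator norm $|A|$. (H2): $f:\mathbb R^d\to\mathbb R^d$, $g:\mathbb R^d\to\mathbb R^{d\times m}$ globally Lipschitz with constants $C_f$, $C_g>0$; $g\in C^1$ with $Dg$ globally Lipschitz. $L=|A|+C_f$, $K=(1-2^{1-2/p})^{-1}$, $a\vee b=\max\{a,b\}$. Greedy times: $\gamma=\frac1{2(K+1)C_g}$, $\tau_0=a$, $\tau_{k+1}=\inf\{t>\tau_k:|||x|||_{p\text{-var},[\tau_k,t]}=\gamma\}\wedge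 b$, $N_{[a,b]}(x)=\min\{k\ge1:\tau_k=b\}$. *)

theory Defs
  imports "HOL-Analysis.Analysis"
begin

definition partition_of :: "real \<Rightarrow> real \<Rightarrow> nat \<Rightarrow> (nat \<Rightarrow> real) \<Rightarrow> bool" where
  "partition_of a b n t \<longleftrightarrow> t 0 = a \<and> t n = b \<and> (\<forall>i<n. t i < t (Suc i))"

definition pvar_sum :: "real \<Rightarrow> (real \<Rightarrow> 'a::real_normed_vector) \<Rightarrow> nat \<Rightarrow> (nat \<Rightarrow> real) \<Rightarrow> real" where
  "pvar_sum p x n t = (\<Sum>i<n. norm (x (t (Suc i)) - x (t i)) powr p)"

definition finite_pvar :: "real \<Rightarrow> (real \<Rightarrow> 'a::real_normed_vector) \<Rightarrow> real \<Rightarrow> real \<Rightarrow> bool" where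
  "finite_pvar p x a b \<longleftrightarrow> bdd_above {pvar_sum p x n t | n t. partition_of a b n t}"

definition pvar_semi :: "real \<Rightarrow> (real \<Rightarrow> 'a::real_normed_vector) \<Rightarrow> real \<Rightarrow> real \<Rightarrow> real" where
  "pvar_semi p x a b = (Sup {pvar_sum p x n t | n t. partition_of a b n t}) powr (1 / p)"

definition pvar_norm :: "real \<Rightarrow> (real \<Rightarrow> 'a::real_normed_vector) \<Rightarrow> real \<Rightarrow> real \<Rightarrow> real" where
  "pvar_norm p x a b = norm (x a) + pvar_semi p x a b"

definition has_young_integral ::
  "(real \<Rightarrow> real^'m^'d) \<Rightarrow> (real \<Rightarrow> real^'m) \<Rightarrow> real \<Rightarrow> real \<Rightarrow> real^'d \<Rightarrow> bool" where
  "has_young_integral F x s t I \<longleftrightarrow>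
     (\<forall>e>0. \<exists>\<delta>>0. \<forall>n \<tau> \<xi>. partition_of s t n \<tau>
        \<and> (\<forall>i<n. \<tau> i \<le> \<xi> i \<and> \<xi> i \<le> \<tau> (Suc i))
        \<and> (\<forall>i<n. \<tau> (Suc i) - \<tau> i < \<delta>)
        \<longrightarrow> norm ((\<Sum>i<n. F (\<xi> i) *v (x (\<tau> (Suc i)) - x (\<tau> i))) - I) < e)"

text \<open>Greedy times: tau 0 = a, tau (k+1) = inf{t > tau k : |||x|||_{[tau k, t]} = gamma} min b,
  with inf of the empty set = +infinity (so the value is b).\<close>
fun greedy_tau :: "real \<Rightarrow> (real \<Rightarrow> 'a::real_normed_vector) \<Rightarrow> real \<Rightarrow> real \<Rightarrow> real \<Rightarrow> nat \<Rightarrow> real" where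
  "greedy_tau p x a b \<gamma> 0 = a"
| "greedy_tau p x a b \<gamma> (Suc k) =
     (let s = greedy_tau p x a b \<gamma> k;
          S = {t. s < t \<and> t \<le> b \<and> pvar_semi p x s t = \<gamma>}
      in if S = {} then b else min (Inf S) b)"

definition greedy_N :: "real \<Rightarrow> (real \<Rightarrow> 'a::real_normed_vector) \<Rightarrow> real \<Rightarrow> real \<Rightarrow> real \<Rightarrow> nat" where
  "greedy_N p x a b \<gamma> = (LEAST k. 1 \<le> k \<and> greedy_tau p x a b \<gamma> k = b)"

definition K_const :: "real \<Rightarrow> real" where
  "K_const p = 1 / (1 - 2 powr (1 - 2 / p))"

end

theory Submission
  imports Defs
begin

text \<open>
  On an interval where \<open>|||x|||\<^sub>p\<close> is at most the greedy threshold \<open>\<gamma>\<close>, the Young--Loeve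
  estimate bounds the Young part of an increment of \<open>y\<close> by \<open>K C\<^sub>g |||y|||\<^sub>p |||x|||\<^sub>p \<le> |||y|||\<^sub>p / 2\<close>;
  Minkowski's inequality over a partition then absorbs this term and gives
  \<open>|||y|||\<^sub>p \<le> 2 (\<integral>(L |y| + |f 0|) + \<parallel>g\<parallel>\<^sub>\<infinity> |||x|||\<^sub>p)\<close> on the interval.
  The greedy times cut \<open>[a, b]\<close> into \<open>N\<close> such intervals, so chaining with the triangle inequality
  for \<open>|||\<cdot>|||\<^sub>p\<close> bounds \<open>|y t - y a|\<close> by an affine integral inequality, and Gronwall's lemma
  concludes.
\<close>

definition partition_sum :: "(real \<Rightarrow> real \<Rightarrow> 'a::comm_monoid_add) \<Rightarrow> nat \<Rightarrow> (nat \<Rightarrow> real) \<Rightarrow> 'a" where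
  "partition_sum \<phi> n \<tau> = (\<Sum>i<n. \<phi> (\<tau> i) (\<tau> (Suc i)))"

definition join_partition :: "nat \<Rightarrow> (nat \<Rightarrow> real) \<Rightarrow> (nat \<Rightarrow> real) \<Rightarrow> nat \<Rightarrow> real" where
  "join_partition n1 \<tau>1 \<tau>2 = (\<lambda>i. if i \<le> n1 then \<tau>1 i else \<tau>2 (i - n1))"

lemma partition_of_less:
  assumes "partition_of s t n \<tau>" "i < j" "j \<le> n"
  shows "\<tau> i < \<tau> j"
  using assms(2,3)
proof (induction j)
  case (Suc j)
  then have "\<tau> j < \<tau> (Suc j)" using assms(1) by (simp add: partition_of_def)
  with Suc show ?case by (cases "i = j") auto
qed simp

lemma partition_of_le:
  assumes "partition_of s t n \<tau>" "i \<le> j" "j \<le> n"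
  shows "\<tau> i \<le> \<tau> j"
  using partition_of_less[OF assms(1), of i j] assms by (cases "i = j") auto

lemma partition_of_bounds:
  assumes "partition_of s t n \<tau>" "i \<le> n"
  shows "s \<le> \<tau> i" "\<tau> i \<le> t"
  using partition_of_le[OF assms(1), of 0 i] partition_of_le[OF assms(1), of i n] assms
  by (auto simp: partition_of_def)

lemma partition_of_cell:
  assumes "partition_of s t n \<tau>" "i < n"
  shows "s \<le> \<tau> i" "\<tau> i \<le> \<tau> (Suc i)" "\<tau> (Suc i) \<le> t"
  using partition_of_bounds[OF assms(1)] partition_of_le[OF assms(1), of i "Suc i"] assms(2) by auto

lemma partition_of_imp_le: "partition_of s t n \<tau> \<Longrightarrow> s \<le> t"
  using partition_of_bounds[of s t n \<tau> 0] by (auto simp: partition_of_def)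

lemma partition_of_same_ends: "partition_of s s n \<tau> \<Longrightarrow> n = 0"
  using partition_of_less[of s s n \<tau> 0 n] by (cases n) (auto simp: partition_of_def)

lemma partition_of_refl: "partition_of s s 0 (\<lambda>_. s)"
  by (simp add: partition_of_def)

lemma partition_of_two_points: "s < t \<Longrightarrow> partition_of s t 1 (\<lambda>i. if i = 0 then s else t)"
  by (simp add: partition_of_def)

lemma partition_of_exists: "s \<le> t \<Longrightarrow> \<exists>n \<tau>. partition_of s t n \<tau>"
  using partition_of_refl[of s] partition_of_two_points[of s t] by (cases "s = t") auto

lemma partition_of_join:
  assumes "partition_of s u n1 \<tau>1" "partition_of u t n2 \<tau>2"
  shows "partition_of s t (n1 + n2) (join_partition n1 \<tau>1 \<tau>2)"
  unfolding partition_of_def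
proof (intro conjI allI impI)
  fix i assume "i < n1 + n2"
  then consider "i < n1" | "i = n1" "0 < n2" | "n1 < i" "Suc i - n1 = Suc (i - n1)" "i - n1 < n2"
    by linarith
  then show "join_partition n1 \<tau>1 \<tau>2 i < join_partition n1 \<tau>1 \<tau>2 (Suc i)"
    by cases (use assms in \<open>auto simp: join_partition_def partition_of_def\<close>)
qed (use assms in \<open>auto simp: join_partition_def partition_of_def\<close>)

lemma sum_lessThan_add: "(\<Sum>i<m + (n::nat). f i) = (\<Sum>i<m. f i) + (\<Sum>i<n. f (m + i))"
  by (induction n) (auto simp: add.assoc)

lemma partition_sum_join:
  assumes "\<tau>1 n1 = \<tau>2 0"
  shows "partition_sum \<phi> (n1 + n2) (join_partition n1 \<tau>1 \<tau>2) = partition_sum \<phi> n1 \<tau>1 + partition_sum \<phi> n2 \<tau>2"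
  unfolding partition_sum_def sum_lessThan_add
  using assms by (intro arg_cong2[where f = "(+)"] sum.cong) (auto simp: join_partition_def Suc_diff_le)

lemma partition_sum_le_extension:
  fixes \<phi> :: "real \<Rightarrow> real \<Rightarrow> real"
  assumes nonneg: "\<And>u v. 0 \<le> \<phi> u v" and P: "partition_of s t n \<tau>" and "a \<le> s" "t \<le> b"
  shows "\<exists>m \<sigma>. partition_of a b m \<sigma> \<and> partition_sum \<phi> n \<tau> \<le> partition_sum \<phi> m \<sigma>"
proof -
  obtain n1 \<tau>1 n2 \<tau>2 where P1: "partition_of a s n1 \<tau>1" and P2: "partition_of t b n2 \<tau>2"
    using partition_of_exists assms by meson
  let ?\<sigma> = "join_partition (n1 + n) (join_partition n1 \<tau>1 \<tau>) \<tau>2"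
  have "partition_of a b (n1 + n + n2) ?\<sigma>"
    by (rule partition_of_join[OF partition_of_join[OF P1 P] P2])
  moreover have "partition_sum \<phi> (n1 + n + n2) ?\<sigma>
      = partition_sum \<phi> (n1 + n) (join_partition n1 \<tau>1 \<tau>) + partition_sum \<phi> n2 \<tau>2"
    by (rule partition_sum_join) (use P1 P P2 in \<open>auto simp: join_partition_def partition_of_def\<close>)
  moreover have "partition_sum \<phi> (n1 + n) (join_partition n1 \<tau>1 \<tau>)
      = partition_sum \<phi> n1 \<tau>1 + partition_sum \<phi> n \<tau>"
    by (rule partition_sum_join) (use P1 P in \<open>simp add: partition_of_def\<close>)
  moreover have "0 \<le> partition_sum \<phi> n1 \<tau>1" "0 \<le> partition_sum \<phi> n2 \<tau>2"
    unfolding partition_sum_def by (simp_all add: sum_nonneg nonneg)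
  ultimately show ?thesis by (metis add_increasing add_increasing2 order_refl)
qed

section \<open>Minkowski's inequality\<close>

lemma powr_add_le_weighted:
  fixes u v l p :: real
  assumes p: "1 \<le> p" and l: "0 < l" "l < 1" and uv: "0 \<le> u" "0 \<le> v"
  shows "(u + v) powr p \<le> l powr (1 - p) * u powr p + (1 - l) powr (1 - p) * v powr p"
proof -
  have weights: "1 \<le> l powr (1 - p)" "1 \<le> (1 - l) powr (1 - p)"
    using l p by (auto intro!: powr_le1 simp: powr_minus_divide[of _ "p - 1", simplified])
  consider "u = 0" | "v = 0" | "0 < u" "0 < v" using uv by linarith
  then show ?thesis
  proof cases
    case 3
    have "((1 - (1 - l)) *\<^sub>R (u / l) + (1 - l) *\<^sub>R (v / (1 - l))) powr p
        \<le> (1 - (1 - l)) * (u / l) powr p + (1 - l) * (v / (1 - l)) powr p"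
      using convex_onD[OF powr_convex[OF p], of "1 - l" "u / l" "v / (1 - l)"] 3 l by simp
    then show ?thesis using l 3 by (simp add: powr_divide powr_diff)
  qed (use weights mult_right_mono[OF weights(1), of "u powr p"]
        mult_right_mono[OF weights(2), of "v powr p"] in auto)
qed

lemma minkowski:
  fixes a b :: "'i \<Rightarrow> real"
  assumes p: "1 \<le> p" and I: "finite I" and nonneg: "\<And>i. i \<in> I \<Longrightarrow> 0 \<le> a i" "\<And>i. i \<in> I \<Longrightarrow> 0 \<le> b i"
  shows "(\<Sum>i\<in>I. (a i + b i) powr p) powr (1/p)
     \<le> (\<Sum>i\<in>I. a i powr p) powr (1/p) + (\<Sum>i\<in>I. b i powr p) powr (1/p)"
proof -
  define P where "P = (\<Sum>i\<in>I. a i powr p) powr (1/p)"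
  define Q where "Q = (\<Sum>i\<in>I. b i powr p) powr (1/p)"
  have sums: "(\<Sum>i\<in>I. a i powr p) = P powr p" "(\<Sum>i\<in>I. b i powr p) = Q powr p"
    using p by (simp_all add: P_def Q_def powr_powr sum_nonneg)
  have vanish: "c i = 0" if "(\<Sum>i\<in>I. c i powr p) = 0" "i \<in> I" "\<And>i. i \<in> I \<Longrightarrow> 0 \<le> c i" for c i
    using sum_nonneg_eq_0_iff[of I "\<lambda>i. c i powr p"] that I by simp
  consider "P = 0" | "Q = 0" | "0 < P" "0 < Q" using P_def Q_def by fastforce
  then show ?thesis
  proof cases
    case 1
    then have "\<And>i. i \<in> I \<Longrightarrow> a i = 0" using vanish[of a] sums nonneg by simp
    then show ?thesis using 1 by (simp add: Q_def)
  next
    case 2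
    then have "\<And>i. i \<in> I \<Longrightarrow> b i = 0" using vanish[of b] sums nonneg by simp
    then show ?thesis using 2 by (simp add: P_def)
  next
    case 3
    define l where "l = P / (P + Q)"
    have l: "0 < l" "l < 1" "1 - l = Q / (P + Q)" using 3 by (auto simp: l_def field_simps)
    have "(\<Sum>i\<in>I. (a i + b i) powr p)
        \<le> (\<Sum>i\<in>I. l powr (1 - p) * a i powr p + (1 - l) powr (1 - p) * b i powr p)"
      by (intro sum_mono powr_add_le_weighted[OF p l(1,2)] nonneg)
    also have "\<dots> = l powr (1 - p) * P powr p + (1 - l) powr (1 - p) * Q powr p"
      by (simp add: sum.distrib flip: sum_distrib_left sums)
    also have "\<dots> = P * (P + Q) powr (p - 1) + Q * (P + Q) powr (p - 1)"
    proof -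
      have "(c / S) powr (1 - p) * c powr p = c * S powr (p - 1)" if "0 < c" "0 < S" for c S :: real
        using that by (simp add: powr_divide powr_diff powr_minus_divide field_simps)
      then show ?thesis using 3 unfolding l(3) unfolding l_def by simp
    qed
    also have "\<dots> = (P + Q) powr p"
      using 3 by (simp add: powr_mult_base flip: distrib_right)
    finally have "(\<Sum>i\<in>I. (a i + b i) powr p) powr (1/p) \<le> ((P + Q) powr p) powr (1/p)"
      using p by (intro powr_mono2) (auto intro: sum_nonneg)
    then show ?thesis
      using 3 p by (simp add: P_def Q_def powr_powr)
  qed
qed

lemma minkowski_family:
  fixes a :: "'i \<Rightarrow> 'j \<Rightarrow> real"
  assumes p: "1 \<le> p" and "finite I" "finite J" and "\<And>i j. i \<in> I \<Longrightarrow> j \<in> J \<Longrightarrow> 0 \<le> a i j"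
  shows "(\<Sum>j\<in>J. (\<Sum>i\<in>I. a i j) powr p) powr (1/p) \<le> (\<Sum>i\<in>I. (\<Sum>j\<in>J. a i j powr p) powr (1/p))"
  using assms(2,4)
proof (induction I rule: finite_induct)
  case (insert i I)
  have "(\<Sum>j\<in>J. (a i j + (\<Sum>i\<in>I. a i j)) powr p) powr (1/p)
      \<le> (\<Sum>j\<in>J. a i j powr p) powr (1/p) + (\<Sum>j\<in>J. (\<Sum>i\<in>I. a i j) powr p) powr (1/p)"
    using insert.prems by (intro minkowski[OF p assms(3)]) (auto intro: sum_nonneg)
  with insert show ?case by simp
qed simp

lemma powr_add_le_powr_sum:
  fixes u v p :: real
  assumes "1 \<le> p" "0 \<le> u" "0 \<le> v"
  shows "u powr p + v powr p \<le> (u + v) powr p"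
proof (cases "u + v = 0")
  case False
  then have "0 < u + v" using assms by simp
  have "c powr p \<le> c * (u + v) powr (p - 1)" if "0 \<le> c" "c \<le> u + v" for c
  proof (cases "c = 0")
    case False
    then have "c powr p = c * c powr (p - 1)" using that by (simp add: powr_mult_base)
    also have "\<dots> \<le> c * (u + v) powr (p - 1)"
      using that False assms by (intro mult_left_mono powr_mono2) auto
    finally show ?thesis .
  qed (use assms in simp)
  then have "u powr p + v powr p \<le> u * (u + v) powr (p - 1) + v * (u + v) powr (p - 1)"
    using assms by (intro add_mono) auto
  also have "\<dots> = (u + v) powr p"
    using \<open>0 < u + v\<close> by (simp add: powr_mult_base flip: distrib_right)
  finally show ?thesis .
qed (use assms in \<open>simp add: add_nonneg_eq_0_iff\<close>)

lemma powr_scale_root: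
  fixes k w p :: real
  assumes "0 \<le> k" "0 \<le> w" "0 < p"
  shows "(k powr p * w) powr (1/p) = k * w powr (1/p)"
proof -
  have "(k powr p * w) powr (1/p) = (k powr p) powr (1/p) * w powr (1/p)"
    using assms by (simp add: powr_mult)
  also have "(k powr p) powr (1/p) = k"
    using assms by (simp add: powr_powr)
  finally show ?thesis .
qed

definition control_on :: "real \<Rightarrow> real \<Rightarrow> (real \<Rightarrow> real \<Rightarrow> real) \<Rightarrow> bool" where
  "control_on s t \<omega> \<longleftrightarrow>
     (\<forall>u v. s \<le> u \<longrightarrow> u \<le> v \<longrightarrow> v \<le> t \<longrightarrow> 0 \<le> \<omega> u v) \<and>
     (\<forall>u v w. s \<le> u \<longrightarrow> u \<le> v \<longrightarrow> v \<le> w \<longrightarrow> w \<le> t \<longrightarrow> \<omega> u v + \<omega> v w \<le> \<omega> u w)"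

lemma partition_sum_le_control:
  assumes P: "partition_of s t n \<tau>" and \<omega>: "control_on s t \<omega>"
  shows "partition_sum \<omega> n \<tau> \<le> \<omega> s t"
proof -
  have "partition_sum \<omega> k \<tau> \<le> \<omega> s (\<tau> k)" if "k \<le> n" for k
    using that
  proof (induction k)
    case 0
    then show ?case using \<omega> P partition_of_imp_le[OF P] by (simp add: partition_sum_def partition_of_def control_on_def)
  next
    case (Suc k)
    then have "partition_sum \<omega> (Suc k) \<tau> \<le> \<omega> s (\<tau> k) + \<omega> (\<tau> k) (\<tau> (Suc k))"
      by (simp add: partition_sum_def)
    also have "\<dots> \<le> \<omega> s (\<tau> (Suc k))"
      using \<omega> partition_of_cell[OF P, of k] Suc.prems by (simp add: control_on_def)
    finally show ?case .
  qed
  from this[of n] P show ?thesis by (simp add: partition_of_def)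
qed

lemma control_on_compose_mono:
  assumes "control_on a b \<omega>" "mono_on {s..t} \<phi>" "\<phi> ` {s..t} \<subseteq> {a..b}"
  shows "control_on s t (\<lambda>u v. \<omega> (\<phi> u) (\<phi> v))"
proof -
  have "a \<le> \<phi> u \<and> \<phi> u \<le> \<phi> v \<and> \<phi> v \<le> b" if "s \<le> u" "u \<le> v" "v \<le> t" for u v
    using assms(2,3) that unfolding mono_on_def image_subset_iff by (meson atLeastAtMost_iff order_trans)
  with assms(1) show ?thesis unfolding control_on_def by (meson order_trans)
qed

lemma control_on_scale:
  assumes "control_on s t \<omega>" "0 \<le> k"
  shows "control_on s t (\<lambda>u v. k * \<omega> u v)"
  using assms by (auto simp: control_on_def simp flip: distrib_left intro: mult_left_mono)

lemma control_on_integral_powr: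
  fixes h :: "real \<Rightarrow> real"
  assumes h: "continuous_on {s..t} h" "\<And>r. r \<in> {s..t} \<Longrightarrow> 0 \<le> h r" and p: "1 \<le> p"
  shows "control_on s t (\<lambda>u v. integral {u..v} h powr p)"
  unfolding control_on_def
proof (intro conjI allI impI)
  fix u v w assume uvw: "s \<le> u" "u \<le> v" "v \<le> w" "w \<le> t"
  have int: "h integrable_on {u..w}"
    using uvw by (intro integrable_continuous_interval continuous_on_subset[OF h(1)]) auto
  have nonneg: "0 \<le> integral {u'..v'} h" if "s \<le> u'" "v' \<le> t" for u' v'
    using h(2) that by (intro integral_nonneg integrable_continuous_interval continuous_on_subset[OF h(1)]) auto
  have "integral {u..v} h powr p + integral {v..w} h powr p \<le> (integral {u..v} h + integral {v..w} h) powr p"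
    using nonneg uvw by (intro powr_add_le_powr_sum[OF p]) auto
  also have "integral {u..v} h + integral {v..w} h = integral {u..w} h"
    using uvw by (intro Henstock_Kurzweil_Integration.integral_combine int) auto
  finally show "integral {u..v} h powr p + integral {v..w} h powr p \<le> integral {u..w} h powr p" .
qed simp

definition pvar_control :: "real \<Rightarrow> (real \<Rightarrow> 'a::real_normed_vector) \<Rightarrow> real \<Rightarrow> real \<Rightarrow> real" where
  "pvar_control p x s t = Sup {pvar_sum p x n \<tau> | n \<tau>. partition_of s t n \<tau>}"

lemma pvar_semi_eq_pvar_control: "pvar_semi p x s t = pvar_control p x s t powr (1/p)"
  by (simp add: pvar_semi_def pvar_control_def)

lemma pvar_sum_eq_partition_sum: "pvar_sum p x n \<tau> = partition_sum (\<lambda>u v. norm (x v - x u) powr p) n \<tau>"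
  by (simp add: pvar_sum_def partition_sum_def)

lemma pvar_sum_nonneg: "0 \<le> pvar_sum p x n \<tau>"
  unfolding pvar_sum_def by (simp add: sum_nonneg)

lemma pvar_sum_le_extension:
  assumes "partition_of s t n \<tau>" "a \<le> s" "t \<le> b"
  shows "\<exists>m \<sigma>. partition_of a b m \<sigma> \<and> pvar_sum p x n \<tau> \<le> pvar_sum p x m \<sigma>"
  using partition_sum_le_extension[OF _ assms] unfolding pvar_sum_eq_partition_sum by auto

lemma finite_pvar_subinterval:
  assumes "finite_pvar p x a b" "a \<le> s" "t \<le> b"
  shows "finite_pvar p x s t"
proof -
  obtain M where M: "\<And>n \<tau>. partition_of a b n \<tau> \<Longrightarrow> pvar_sum p x n \<tau> \<le> M"
    using assms(1) unfolding finite_pvar_def bdd_above_def by blast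
  have "pvar_sum p x n \<tau> \<le> M" if "partition_of s t n \<tau>" for n \<tau>
    using pvar_sum_le_extension[OF that assms(2,3)] M by (meson order_trans)
  then show ?thesis unfolding finite_pvar_def bdd_above_def by blast
qed

lemma pvar_sum_le_pvar_control:
  assumes "finite_pvar p x s t" "partition_of s t n \<tau>"
  shows "pvar_sum p x n \<tau> \<le> pvar_control p x s t"
  unfolding pvar_control_def by (rule cSup_upper) (use assms in \<open>auto simp: finite_pvar_def\<close>)

lemma pvar_control_least:
  assumes "s \<le> t" "\<And>n \<tau>. partition_of s t n \<tau> \<Longrightarrow> pvar_sum p x n \<tau> \<le> M"
  shows "pvar_control p x s t \<le> M"
  unfolding pvar_control_def using partition_of_exists[OF assms(1)] assms(2) by (intro cSup_least) auto

lemma pvar_control_nonneg: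
  assumes "finite_pvar p x s t" "s \<le> t"
  shows "0 \<le> pvar_control p x s t"
  using partition_of_exists[OF assms(2)] pvar_sum_le_pvar_control[OF assms(1)] pvar_sum_nonneg
  by (meson order_trans)

lemma pvar_control_same [simp]: "pvar_control p x s s = 0"
proof -
  have "{pvar_sum p x n \<tau> | n \<tau>. partition_of s s n \<tau>} = {0}"
    using partition_of_same_ends partition_of_refl by (fastforce simp: pvar_sum_def)
  then show ?thesis by (simp add: pvar_control_def)
qed

lemma pvar_control_mono:
  assumes "finite_pvar p x a b" "a \<le> s" "s \<le> t" "t \<le> b"
  shows "pvar_control p x s t \<le> pvar_control p x a b"
proof (rule pvar_control_least[OF assms(3)])
  fix n \<tau> assume "partition_of s t n \<tau>"
  with assms show "pvar_sum p x n \<tau> \<le> pvar_control p x a b"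
    by (meson order_trans pvar_sum_le_extension pvar_sum_le_pvar_control)
qed

lemma norm_powr_le_pvar_control:
  assumes "finite_pvar p x s t" "s \<le> t"
  shows "norm (x t - x s) powr p \<le> pvar_control p x s t"
proof (cases "s = t")
  case False
  then have "partition_of s t 1 (\<lambda>i. if i = 0 then s else t)"
    using partition_of_two_points assms by simp
  from pvar_sum_le_pvar_control[OF assms(1) this] show ?thesis by (simp add: pvar_sum_def)
qed simp

lemma pvar_control_superadditive:
  assumes "finite_pvar p x s t" "s \<le> u" "u \<le> t"
  shows "pvar_control p x s u + pvar_control p x u t \<le> pvar_control p x s t"
proof -
  have "pvar_control p x u t \<le> pvar_control p x s t - pvar_control p x s u"
  proof (rule pvar_control_least[OF assms(3)])
    fix n2 \<tau>2 assume P2: "partition_of u t n2 \<tau>2"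
    have "pvar_control p x s u \<le> pvar_control p x s t - pvar_sum p x n2 \<tau>2"
    proof (rule pvar_control_least[OF assms(2)])
      fix n1 \<tau>1 assume P1: "partition_of s u n1 \<tau>1"
      have "pvar_sum p x n1 \<tau>1 + pvar_sum p x n2 \<tau>2 = pvar_sum p x (n1 + n2) (join_partition n1 \<tau>1 \<tau>2)"
        unfolding pvar_sum_eq_partition_sum
        by (rule partition_sum_join[symmetric]) (use P1 P2 in \<open>simp add: partition_of_def\<close>)
      also have "\<dots> \<le> pvar_control p x s t"
        by (rule pvar_sum_le_pvar_control[OF assms(1) partition_of_join[OF P1 P2]])
      finally show "pvar_sum p x n1 \<tau>1 \<le> pvar_control p x s t - pvar_sum p x n2 \<tau>2" by simp
    qed
    then show "pvar_sum p x n2 \<tau>2 \<le> pvar_control p x s t - pvar_control p x s u" by simp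
  qed
  then show ?thesis by simp
qed

lemma control_on_pvar_control:
  assumes "finite_pvar p x a b"
  shows "control_on a b (pvar_control p x)"
  unfolding control_on_def
  using pvar_control_nonneg pvar_control_superadditive finite_pvar_subinterval[OF assms]
  by (meson order_trans)

lemma pvar_control_eq_pvar_semi_powr:
  assumes "finite_pvar p x s t" "s \<le> t" "0 < p"
  shows "pvar_control p x s t = pvar_semi p x s t powr p"
  using pvar_control_nonneg[OF assms(1,2)] assms(3) by (simp add: pvar_semi_eq_pvar_control powr_powr)

lemma pvar_semi_nonneg: "0 \<le> pvar_semi p x s t"
  by (simp add: pvar_semi_eq_pvar_control)

lemma pvar_semi_same [simp]: "pvar_semi p x s s = 0"
  by (simp add: pvar_semi_eq_pvar_control)

lemma norm_le_pvar_semi: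
  assumes "finite_pvar p x s t" "s \<le> t" "0 < p"
  shows "norm (x t - x s) \<le> pvar_semi p x s t"
proof -
  have "(norm (x t - x s) powr p) powr (1/p) \<le> pvar_semi p x s t"
    unfolding pvar_semi_eq_pvar_control using norm_powr_le_pvar_control[OF assms(1,2)] assms(3)
    by (intro powr_mono2) auto
  then show ?thesis using assms(3) by (simp add: powr_powr)
qed

lemma pvar_semi_mono:
  assumes "finite_pvar p x a b" "0 < p" "a \<le> s" "s \<le> t" "t \<le> b"
  shows "pvar_semi p x s t \<le> pvar_semi p x a b"
  unfolding pvar_semi_eq_pvar_control
  using pvar_control_mono[OF assms(1,3-5)] pvar_control_nonneg[OF finite_pvar_subinterval[OF assms(1,3,5)] assms(4)] assms(2)
  by (intro powr_mono2) auto

lemma pvar_control_root_le_sum_controls: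
  fixes \<omega> :: "'i \<Rightarrow> real \<Rightarrow> real \<Rightarrow> real"
  assumes p: "1 \<le> p" and st: "s \<le> t" and I: "finite I"
    and \<omega>: "\<And>i. i \<in> I \<Longrightarrow> control_on s t (\<omega> i)"
    and incr: "\<And>u v. s \<le> u \<Longrightarrow> u \<le> v \<Longrightarrow> v \<le> t \<Longrightarrow> norm (x v - x u) \<le> (\<Sum>i\<in>I. \<omega> i u v powr (1/p))"
  shows "pvar_control p x s t powr (1/p) \<le> (\<Sum>i\<in>I. \<omega> i s t powr (1/p))"
proof -
  define R where "R = (\<Sum>i\<in>I. \<omega> i s t powr (1/p))"
  have R: "0 \<le> R" unfolding R_def by (simp add: sum_nonneg)
  have sum_le: "pvar_sum p x n \<tau> \<le> R powr p" if P: "partition_of s t n \<tau>" for n \<tau>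
  proof -
    define a where "a = (\<lambda>i j. \<omega> i (\<tau> j) (\<tau> (Suc j)) powr (1/p))"
    have cell: "0 \<le> \<omega> i (\<tau> j) (\<tau> (Suc j))" if "i \<in> I" "j < n" for i j
      using \<omega>[OF that(1)] partition_of_cell[OF P that(2)] by (simp add: control_on_def)
    have pvar_le: "pvar_sum p x n \<tau> \<le> (\<Sum>j<n. (\<Sum>i\<in>I. a i j) powr p)"
      unfolding pvar_sum_def a_def using p partition_of_cell[OF P]
      by (intro sum_mono powr_mono2 incr) auto
    have "(\<Sum>j<n. (\<Sum>i\<in>I. a i j) powr p) powr (1/p) \<le> (\<Sum>i\<in>I. (\<Sum>j<n. a i j powr p) powr (1/p))"
      by (rule minkowski_family[OF p I]) (auto simp: a_def)
    also have "\<dots> = (\<Sum>i\<in>I. partition_sum (\<omega> i) n \<tau> powr (1/p))"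
      unfolding a_def partition_sum_def using cell p by (intro sum.cong refl) (auto simp: powr_powr)
    also have "\<dots> \<le> R"
      unfolding R_def using partition_sum_le_control[OF P \<omega>] cell p
      by (intro sum_mono powr_mono2) (auto simp: partition_sum_def intro!: sum_nonneg)
    finally have "(\<Sum>j<n. (\<Sum>i\<in>I. a i j) powr p) powr (1/p) \<le> R" .
    then have "((\<Sum>j<n. (\<Sum>i\<in>I. a i j) powr p) powr (1/p)) powr p \<le> R powr p"
      using p by (intro powr_mono2) auto
    then have "(\<Sum>j<n. (\<Sum>i\<in>I. a i j) powr p) \<le> R powr p"
      using p by (simp add: powr_powr sum_nonneg)
    with pvar_le show ?thesis by linarith
  qed
  then have "finite_pvar p x s t"
    unfolding finite_pvar_def bdd_above_def by blast
  then have "0 \<le> pvar_control p x s t" using pvar_control_nonneg st by blast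
  moreover have "pvar_control p x s t \<le> R powr p"
    using pvar_control_least[OF st sum_le] .
  ultimately have "pvar_control p x s t powr (1/p) \<le> (R powr p) powr (1/p)"
    using p by (intro powr_mono2) auto
  then show ?thesis using p R by (simp add: powr_powr R_def)
qed

text \<open>Clamping to \<open>[s, u]\<close> and to \<open>[u, t]\<close> splits every increment of \<open>x\<close> into two increments,
  controlled by the two halves.\<close>
lemma pvar_control_root_triangle:
  assumes p: "1 \<le> p" and fp: "finite_pvar p x s t" and u: "s \<le> u" "u \<le> t"
  shows "pvar_control p x s t powr (1/p) \<le> pvar_control p x s u powr (1/p) + pvar_control p x u t powr (1/p)"
proof -
  define \<omega> where "\<omega> = (\<lambda>b. if b then (\<lambda>v w. pvar_control p x (max v u) (max w u))
                                else (\<lambda>v w. pvar_control p x (min v u) (min w u)))"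
  have "control_on s t (\<lambda>v w. pvar_control p x (min v u) (min w u))"
    by (rule control_on_compose_mono[OF control_on_pvar_control[OF finite_pvar_subinterval[OF fp, of s u]]])
       (use u in \<open>auto simp: mono_on_def\<close>)
  moreover have "control_on s t (\<lambda>v w. pvar_control p x (max v u) (max w u))"
    by (rule control_on_compose_mono[OF control_on_pvar_control[OF finite_pvar_subinterval[OF fp, of u t]]])
       (use u in \<open>auto simp: mono_on_def\<close>)
  ultimately have ctrl: "control_on s t (\<omega> b)" if "b \<in> UNIV" for b by (simp add: \<omega>_def)
  have incr: "norm (x w - x v) \<le> (\<Sum>b\<in>UNIV. \<omega> b v w powr (1/p))" if "s \<le> v" "v \<le> w" "w \<le> t" for v w
  proof -
    have root: "norm (x w' - x v') \<le> pvar_control p x v' w' powr (1/p)" if "s \<le> v'" "v' \<le> w'" "w' \<le> t" for v' w'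
      using norm_le_pvar_semi[OF finite_pvar_subinterval[OF fp] _ ] that p
      by (simp add: pvar_semi_eq_pvar_control)
    have "x w - x v = (x (min w u) - x (min v u)) + (x (max w u) - x (max v u))"
      using that by (auto simp: min_def max_def)
    then have "norm (x w - x v) \<le> norm (x (min w u) - x (min v u)) + norm (x (max w u) - x (max v u))"
      by (simp only: norm_triangle_ineq)
    also have "\<dots> \<le> pvar_control p x (min v u) (min w u) powr (1/p) + pvar_control p x (max v u) (max w u) powr (1/p)"
      using that u by (intro add_mono root) auto
    also have "\<dots> = (\<Sum>b\<in>UNIV. \<omega> b v w powr (1/p))"
      by (simp add: \<omega>_def UNIV_bool)
    finally show ?thesis .
  qed
  have "pvar_control p x s t powr (1/p) \<le> (\<Sum>b\<in>UNIV. \<omega> b s t powr (1/p))"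
    by (rule pvar_control_root_le_sum_controls[OF p order_trans[OF u] _ ctrl incr]) simp
  also have "\<dots> = pvar_control p x s u powr (1/p) + pvar_control p x u t powr (1/p)"
    using u by (simp add: \<omega>_def UNIV_bool min_absorb1 min_absorb2 max_absorb1 max_absorb2)
  finally show ?thesis .
qed

section \<open>Continuity of the \<open>p\<close>-variation\<close>

text \<open>A partition nearly attaining \<open>pvar_control p x c d\<close> keeps most of its sum when its first point
  is moved slightly to the right, by continuity of \<open>x\<close> at \<open>c\<close>.\<close>
lemma pvar_control_shrink_left_end:
  fixes x :: "real \<Rightarrow> 'a::real_normed_vector"
  assumes xc: "continuous_on {c..d} x" and fp: "finite_pvar p x c d" and p: "0 < p"
    and cd: "c < d" and big: "\<epsilon> \<le> pvar_control p x c d" and \<epsilon>: "0 < \<epsilon>"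
  shows "\<exists>c'. c < c' \<and> c' < d \<and> \<epsilon>/2 \<le> pvar_control p x c' d"
proof -
  have ne: "{pvar_sum p x n \<tau> |n \<tau>. partition_of c d n \<tau>} \<noteq> {}"
    using partition_of_exists[of c d] cd by auto
  have "3/4 * \<epsilon> < pvar_control p x c d" using big \<epsilon> by simp
  then obtain n \<tau> where P: "partition_of c d n \<tau>" and S: "3/4 * \<epsilon> < pvar_sum p x n \<tau>"
    unfolding pvar_control_def using less_cSupE[OF _ ne] by blast
  obtain m where n: "n = Suc m" using partition_of_same_ends P cd
    by (cases n) (auto simp: partition_of_def)
  have \<tau>1: "c < \<tau> 1" "\<tau> 1 \<le> d" using P partition_of_bounds[OF P, of 1] by (auto simp: n partition_of_def)
  have "((\<lambda>r. norm (x (\<tau> 1) - x r) powr p) \<longlongrightarrow> norm (x (\<tau> 1) - x c) powr p) (at c within {c..d})"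
    using xc cd p unfolding continuous_on_def by (intro tendsto_intros) auto
  then have "\<forall>\<^sub>F r in at c within {c..d}. norm (x (\<tau> 1) - x c) powr p - \<epsilon>/4 < norm (x (\<tau> 1) - x r) powr p"
    using \<epsilon> by (intro order_tendstoD(1)) auto
  then obtain \<delta> where \<delta>: "0 < \<delta>" "\<And>r. r \<in> {c..d} \<Longrightarrow> r \<noteq> c \<Longrightarrow> dist r c < \<delta> \<Longrightarrow>
      norm (x (\<tau> 1) - x c) powr p - \<epsilon>/4 < norm (x (\<tau> 1) - x r) powr p"
    unfolding eventually_at by blast
  obtain \<mu> where \<mu>: "0 < \<mu>" "\<mu> \<le> \<tau> 1 - c" "\<mu> \<le> \<delta>"
    using \<delta>(1) \<tau>1 by (intro that[of "min \<delta> (\<tau> 1 - c)"]) auto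
  define r where "r = c + \<mu> / 2"
  have r: "c < r" "r < \<tau> 1" "dist r c < \<delta>"
    using \<mu> by (auto simp: r_def dist_real_def)
  have P': "partition_of r d n (\<tau>(0 := r))"
    using P r by (auto simp: n partition_of_def)
  have "pvar_sum p x n \<tau> = norm (x (\<tau> 1) - x c) powr p + (\<Sum>i<m. norm (x (\<tau> (Suc (Suc i))) - x (\<tau> (Suc i))) powr p)"
    using P unfolding pvar_sum_def n sum.lessThan_Suc_shift by (simp add: partition_of_def)
  moreover have "pvar_sum p x n (\<tau>(0 := r)) = norm (x (\<tau> 1) - x r) powr p + (\<Sum>i<m. norm (x (\<tau> (Suc (Suc i))) - x (\<tau> (Suc i))) powr p)"
    unfolding pvar_sum_def n sum.lessThan_Suc_shift by simp
  moreover have "norm (x (\<tau> 1) - x c) powr p - \<epsilon>/4 < norm (x (\<tau> 1) - x r) powr p"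
    using \<delta>(2) r \<tau>1 by auto
  moreover have "pvar_sum p x n (\<tau>(0 := r)) \<le> pvar_control p x r d"
    by (rule pvar_sum_le_pvar_control[OF finite_pvar_subinterval[OF fp] P']) (use r in auto)
  ultimately show ?thesis using S r \<tau>1 by (intro exI[of _ r]) auto
qed

text \<open>Otherwise there are infinitely many disjoint intervals in \<open>(c, b]\<close> of control at least \<open>\<epsilon>/2\<close>,
  contradicting superadditivity.\<close>
lemma pvar_control_right_continuous:
  fixes x :: "real \<Rightarrow> 'a::real_normed_vector"
  assumes xc: "continuous_on {c..b} x" and fp: "finite_pvar p x c b" and p: "0 < p" and \<epsilon>: "0 < \<epsilon>"
  shows "\<exists>\<delta>>0. \<forall>d. c \<le> d \<longrightarrow> d \<le> b \<longrightarrow> d < c + \<delta> \<longrightarrow> pvar_control p x c d < \<epsilon>"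
proof (rule ccontr)
  assume "\<not> ?thesis"
  then have large: "\<exists>d. c \<le> d \<and> d \<le> b \<and> d < c + \<delta> \<and> \<epsilon> \<le> pvar_control p x c d" if "\<delta> > 0" for \<delta>
    using that by (meson not_less)
  have fin: "finite_pvar p x u v" if "c \<le> u" "v \<le> b" for u v
    using finite_pvar_subinterval[OF fp that] .
  have large_all: "\<epsilon> \<le> pvar_control p x c d" if d: "c < d" "d \<le> b" for d
  proof -
    obtain d' where d': "c \<le> d'" "d' < d" "\<epsilon> \<le> pvar_control p x c d'"
      using large[of "d - c"] d by auto
    then show ?thesis
      using pvar_control_mono[OF fin, of c d c d'] d by linarith
  qed
  obtain b0 where "c \<le> b0" "b0 \<le> b" "\<epsilon> \<le> pvar_control p x c b0"
    using large[of 1] by auto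
  with \<epsilon> have b0: "c < b0" "b0 \<le> b"
    by (auto simp: order.order_iff_strict)
  have "\<forall>d\<in>{c<..b}. \<exists>d'. c < d' \<and> d' < d \<and> \<epsilon>/2 \<le> pvar_control p x d' d"
    using pvar_control_shrink_left_end[OF continuous_on_subset[OF xc] fin p _ large_all \<epsilon>] by auto
  then obtain G where G: "\<forall>d\<in>{c<..b}. c < G d \<and> G d < d \<and> \<epsilon>/2 \<le> pvar_control p x (G d) d"
    by (auto dest!: bchoice)
  define D where "D k = (G ^^ k) b0" for k
  have D: "c < D k \<and> D k \<le> b0 \<and> real k * (\<epsilon>/2) \<le> pvar_control p x (D k) b0" for k
  proof (induction k)
    case (Suc k)
    then have G_D: "c < G (D k)" "G (D k) < D k" "\<epsilon>/2 \<le> pvar_control p x (G (D k)) (D k)"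
      using G b0 by auto
    moreover have "pvar_control p x (G (D k)) (D k) + pvar_control p x (D k) b0 \<le> pvar_control p x (G (D k)) b0"
      using pvar_control_superadditive[OF fin, of "G (D k)" b0 "D k"] G_D Suc b0 by auto
    ultimately show ?case using Suc by (simp add: D_def algebra_simps)
  qed (simp add: D_def b0)
  obtain k :: nat where k: "pvar_control p x c b0 / (\<epsilon>/2) < real k"
    using reals_Archimedean2 by blast
  have "real k * (\<epsilon>/2) \<le> pvar_control p x c b0"
    using D[of k] pvar_control_mono[OF fin, of c b0 "D k" b0] b0 by auto
  then show False using k \<epsilon> by (simp add: field_simps)
qed

lemma partition_of_reflect:
  assumes "partition_of s t n \<tau>"
  shows "partition_of (-t) (-s) n (\<lambda>i. - \<tau> (n - i))"
  unfolding partition_of_def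
proof (intro conjI allI impI)
  fix i assume "i < n"
  then have "n - i = Suc (n - Suc i)" "n - Suc i < n" by simp_all
  then show "- \<tau> (n - i) < - \<tau> (n - Suc i)" using assms by (simp add: partition_of_def)
qed (use assms in \<open>simp_all add: partition_of_def\<close>)

lemma pvar_sum_reflect: "pvar_sum p (\<lambda>t. x (-t)) n (\<lambda>i. - \<tau> (n - i)) = pvar_sum p x n \<tau>"
proof -
  have "pvar_sum p (\<lambda>t. x (-t)) n (\<lambda>i. - \<tau> (n - i))
      = (\<Sum>i<n. norm (x (\<tau> (Suc (n - Suc i))) - x (\<tau> (n - Suc i))) powr p)"
    unfolding pvar_sum_def by (intro sum.cong refl) (simp add: Suc_diff_Suc norm_minus_commute)
  also have "\<dots> = pvar_sum p x n \<tau>"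
    unfolding pvar_sum_def by (rule sum.nat_diff_reindex)
  finally show ?thesis .
qed

lemma pvar_sums_reflect:
  "{pvar_sum p (\<lambda>t. x (-t)) n \<sigma> | n \<sigma>. partition_of (-t) (-s) n \<sigma>}
     = {pvar_sum p x n \<tau> | n \<tau>. partition_of s t n \<tau>}"
proof (intro equalityI subsetI)
  fix z assume "z \<in> {pvar_sum p (\<lambda>t. x (-t)) n \<sigma> | n \<sigma>. partition_of (-t) (-s) n \<sigma>}"
  then obtain n \<sigma> where "partition_of (-t) (-s) n \<sigma>" "z = pvar_sum p (\<lambda>t. x (-t)) n \<sigma>" by blast
  moreover note partition_of_reflect[OF this(1), simplified]
  moreover note pvar_sum_reflect[of p "\<lambda>t. x (-t)" n \<sigma>, simplified]
  ultimately show "z \<in> {pvar_sum p x n \<tau> | n \<tau>. partition_of s t n \<tau>}"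
    by (intro CollectI exI[of _ n] exI[of _ "\<lambda>i. - \<sigma> (n - i)"]) simp
next
  fix z assume "z \<in> {pvar_sum p x n \<tau> | n \<tau>. partition_of s t n \<tau>}"
  then obtain n \<tau> where "partition_of s t n \<tau>" "z = pvar_sum p x n \<tau>" by blast
  then show "z \<in> {pvar_sum p (\<lambda>t. x (-t)) n \<sigma> | n \<sigma>. partition_of (-t) (-s) n \<sigma>}"
    by (intro CollectI exI[of _ n] exI[of _ "\<lambda>i. - \<tau> (n - i)"]) (simp add: pvar_sum_reflect partition_of_reflect)
qed

lemma pvar_control_reflect: "pvar_control p (\<lambda>t. x (-t)) (-t) (-s) = pvar_control p x s t"
  unfolding pvar_control_def pvar_sums_reflect ..

lemma finite_pvar_reflect: "finite_pvar p (\<lambda>t. x (-t)) (-t) (-s) \<longleftrightarrow> finite_pvar p x s t"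
  unfolding finite_pvar_def pvar_sums_reflect ..

lemma pvar_control_left_continuous:
  fixes x :: "real \<Rightarrow> 'a::real_normed_vector"
  assumes xc: "continuous_on {a..c} x" and fp: "finite_pvar p x a c" and p: "0 < p" and \<epsilon>: "0 < \<epsilon>"
  shows "\<exists>\<delta>>0. \<forall>d. a \<le> d \<longrightarrow> d \<le> c \<longrightarrow> c - \<delta> < d \<longrightarrow> pvar_control p x d c < \<epsilon>"
proof -
  have "continuous_on {-c..-a} (\<lambda>t. x (-t))"
    by (rule continuous_on_compose2[OF xc continuous_on_minus[OF continuous_on_id]]) auto
  moreover have "finite_pvar p (\<lambda>t. x (-t)) (-c) (-a)"
    using fp by (simp add: finite_pvar_reflect)
  ultimately have "\<exists>\<delta>>0. \<forall>d. -c \<le> d \<longrightarrow> d \<le> -a \<longrightarrow> d < -c + \<delta> \<longrightarrow> pvar_control p (\<lambda>t. x (-t)) (-c) d < \<epsilon>"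
    by (rule pvar_control_right_continuous[OF _ _ p \<epsilon>])
  then obtain \<delta> where \<delta>: "\<delta> > 0"
      "\<forall>d. -c \<le> d \<longrightarrow> d \<le> -a \<longrightarrow> d < -c + \<delta> \<longrightarrow> pvar_control p (\<lambda>t. x (-t)) (-c) d < \<epsilon>"
    by blast
  show ?thesis
  proof (intro exI[of _ \<delta>] conjI allI impI)
    fix d assume "a \<le> d" "d \<le> c" "c - \<delta> < d"
    then have "pvar_control p (\<lambda>t. x (-t)) (-c) (-d) < \<epsilon>" using \<delta>(2) by simp
    then show "pvar_control p x d c < \<epsilon>" by (simp add: pvar_control_reflect)
  qed (fact \<delta>(1))
qed

lemma continuous_on_pvar_semi:
  fixes x :: "real \<Rightarrow> 'a::real_normed_vector"
  assumes xc: "continuous_on {s..b} x" and fp: "finite_pvar p x s b" and p: "1 \<le> p"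
  shows "continuous_on {s..b} (\<lambda>t. pvar_semi p x s t)"
  unfolding continuous_on_iff
proof (intro ballI allI impI)
  fix t0 e :: real assume t0: "t0 \<in> {s..b}" and e: "0 < e"
  have fin: "finite_pvar p x u v" if "s \<le> u" "v \<le> b" for u v
    using finite_pvar_subinterval[OF fp that] .
  have close: "dist (pvar_semi p x s t) (pvar_semi p x s t') < e"
    if t: "s \<le> t" "t \<le> t'" "t' \<le> b" and small: "pvar_control p x t t' < e powr p" for t t'
  proof -
    have "pvar_semi p x s t \<le> pvar_semi p x s t'"
      using pvar_semi_mono[OF fin, of s t' s t] p t by auto
    moreover have "pvar_semi p x s t' \<le> pvar_semi p x s t + pvar_control p x t t' powr (1/p)"
      unfolding pvar_semi_eq_pvar_control using t by (intro pvar_control_root_triangle[OF p fin]) auto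
    moreover have "pvar_control p x t t' powr (1/p) < (e powr p) powr (1/p)"
      using small pvar_control_nonneg[OF fin] t p by (intro powr_less_mono2) auto
    ultimately show ?thesis using e p by (simp add: powr_powr dist_real_def)
  qed
  have ep: "0 < e powr p" using e by simp
  obtain \<delta>1 where \<delta>1: "\<delta>1 > 0" "\<forall>d. t0 \<le> d \<longrightarrow> d \<le> b \<longrightarrow> d < t0 + \<delta>1 \<longrightarrow> pvar_control p x t0 d < e powr p"
    using pvar_control_right_continuous[OF continuous_on_subset[OF xc] fin _ ep, of t0 b] t0 p by auto
  obtain \<delta>2 where \<delta>2: "\<delta>2 > 0" "\<forall>d. s \<le> d \<longrightarrow> d \<le> t0 \<longrightarrow> t0 - \<delta>2 < d \<longrightarrow> pvar_control p x d t0 < e powr p"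
    using pvar_control_left_continuous[OF continuous_on_subset[OF xc] fin _ ep, of s t0] t0 p by auto
  show "\<exists>\<delta>>0. \<forall>t\<in>{s..b}. dist t t0 < \<delta> \<longrightarrow> dist (pvar_semi p x s t) (pvar_semi p x s t0) < e"
  proof (intro exI[of _ "min \<delta>1 \<delta>2"] conjI ballI impI)
    fix t assume t: "t \<in> {s..b}" "dist t t0 < min \<delta>1 \<delta>2"
    show "dist (pvar_semi p x s t) (pvar_semi p x s t0) < e"
    proof (cases "t0 \<le> t")
      case True
      then show ?thesis using close[of t0 t] \<delta>1 t t0 by (auto simp: dist_real_def dist_commute)
    next
      case False
      then show ?thesis using close[of t t0] \<delta>2 t t0 by (auto simp: dist_real_def)
    qed
  qed (use \<delta>1 \<delta>2 in auto)
qed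

section \<open>Greedy times\<close>

declare greedy_tau.simps(2) [simp del]

context
  fixes x :: "real \<Rightarrow> 'a::real_normed_vector" and p a b \<gamma> :: real
  assumes xc: "continuous_on {a..b} x" and fp: "finite_pvar p x a b" and p: "1 \<le> p"
    and ab: "a \<le> b" and \<gamma>: "0 < \<gamma>"

begin

text \<open>The infimum of the level set is attained since \<open>t \<mapsto> pvar_semi p x s t\<close> is
  continuous; if the level set is empty, the intermediate value theorem keeps the seminorm below \<open>\<gamma>\<close>.\<close>
lemma greedy_next:
  assumes s: "a \<le> s" "s \<le> b"
  defines "S \<equiv> {t. s < t \<and> t \<le> b \<and> pvar_semi p x s t = \<gamma>}"
  defines "T \<equiv> if S = {} then b else min (Inf S) b"
  shows "s \<le> T \<and> T \<le> b \<and> pvar_semi p x s T \<le> \<gamma> \<and> (T = b \<or> pvar_semi p x s T = \<gamma>)"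
proof -
  have cont: "continuous_on {s..b} (\<lambda>t. pvar_semi p x s t)"
    using s by (intro continuous_on_pvar_semi[OF continuous_on_subset[OF xc] finite_pvar_subinterval[OF fp] p]) auto
  show ?thesis
  proof (cases "S = {}")
    case True
    have "pvar_semi p x s b \<le> \<gamma>"
    proof (rule ccontr)
      assume "\<not> ?thesis"
      then obtain t where t: "s \<le> t" "t \<le> b" "pvar_semi p x s t = \<gamma>"
        using IVT'[of "\<lambda>t. pvar_semi p x s t" s \<gamma> b] \<gamma> s cont by auto
      then have "t \<in> S" using \<gamma> by (auto simp: S_def order.order_iff_strict)
      then show False using True by simp
    qed
    then show ?thesis using True s by (simp add: T_def)
  next
    case False
    have "S = {t \<in> {s..b}. pvar_semi p x s t = \<gamma>}"
      using \<gamma> by (auto simp: S_def order.order_iff_strict)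
    then have "closed S"
      using continuous_closed_preimage_constant[OF cont] by simp
    moreover have "bdd_below S" unfolding S_def bdd_below_def by (auto intro: less_imp_le)
    ultimately have "Inf S \<in> S" using False closed_contains_Inf by blast
    then show ?thesis using False by (auto simp: S_def T_def)
  qed
qed

lemma greedy_tau_Suc_eq:
  "greedy_tau p x a b \<gamma> (Suc k) =
     (if {t. greedy_tau p x a b \<gamma> k < t \<and> t \<le> b \<and> pvar_semi p x (greedy_tau p x a b \<gamma> k) t = \<gamma>} = {}
      then b
      else min (Inf {t. greedy_tau p x a b \<gamma> k < t \<and> t \<le> b \<and> pvar_semi p x (greedy_tau p x a b \<gamma> k) t = \<gamma>}) b)"
  by (simp only: greedy_tau.simps Let_def)

lemma greedy_tau_bounds: "a \<le> greedy_tau p x a b \<gamma> k \<and> greedy_tau p x a b \<gamma> k \<le> b"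
proof (induction k)
  case (Suc k)
  then show ?case using greedy_next[of "greedy_tau p x a b \<gamma> k"] unfolding greedy_tau_Suc_eq by auto
qed (simp add: ab)

lemma greedy_tau_Suc_props:
  "greedy_tau p x a b \<gamma> k \<le> greedy_tau p x a b \<gamma> (Suc k) \<and>
   pvar_semi p x (greedy_tau p x a b \<gamma> k) (greedy_tau p x a b \<gamma> (Suc k)) \<le> \<gamma> \<and>
   (greedy_tau p x a b \<gamma> (Suc k) = b \<or> pvar_semi p x (greedy_tau p x a b \<gamma> k) (greedy_tau p x a b \<gamma> (Suc k)) = \<gamma>)"
  using greedy_next[of "greedy_tau p x a b \<gamma> k"] greedy_tau_bounds[of k]
  unfolding greedy_tau_Suc_eq by blast

lemma greedy_tau_le_Suc: "greedy_tau p x a b \<gamma> k \<le> greedy_tau p x a b \<gamma> (Suc k)"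
  using greedy_tau_Suc_props by blast

lemma pvar_semi_greedy_cell_le: "pvar_semi p x (greedy_tau p x a b \<gamma> k) (greedy_tau p x a b \<gamma> (Suc k)) \<le> \<gamma>"
  using greedy_tau_Suc_props by blast

text \<open>Each step that does not reach \<open>b\<close> uses up \<open>\<gamma> powr p\<close> of the finite control of \<open>[a, b]\<close>.\<close>
lemma greedy_N_reaches_end: "1 \<le> greedy_N p x a b \<gamma>" "greedy_tau p x a b \<gamma> (greedy_N p x a b \<gamma>) = b"
proof -
  define \<tau> where "\<tau> = greedy_tau p x a b \<gamma>"
  have fin: "finite_pvar p x u v" if "a \<le> u" "v \<le> b" for u v
    using finite_pvar_subinterval[OF fp that] .
  have progress: "\<tau> k = b \<or> real k * \<gamma> powr p \<le> pvar_control p x a (\<tau> k)" for k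
  proof (induction k)
    case (Suc k)
    have step: "a \<le> \<tau> k" "\<tau> k \<le> \<tau> (Suc k)" "\<tau> (Suc k) \<le> b"
      "\<tau> (Suc k) = b \<or> pvar_semi p x (\<tau> k) (\<tau> (Suc k)) = \<gamma>"
      using greedy_tau_Suc_props[of k] greedy_tau_bounds[of k] greedy_tau_bounds[of "Suc k"]
      unfolding \<tau>_def by blast+
    show ?case
    proof (cases "\<tau> k = b \<or> \<tau> (Suc k) = b")
      case True
      then show ?thesis using step by auto
    next
      case False
      then have "pvar_control p x (\<tau> k) (\<tau> (Suc k)) = \<gamma> powr p"
        using step pvar_control_eq_pvar_semi_powr[OF fin] p by auto
      moreover have "pvar_control p x a (\<tau> k) + pvar_control p x (\<tau> k) (\<tau> (Suc k)) \<le> pvar_control p x a (\<tau> (Suc k))"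
        using pvar_control_superadditive[OF fin] step by auto
      ultimately show ?thesis using Suc False by (simp add: algebra_simps)
    qed
  qed (simp add: \<tau>_def)
  obtain k :: nat where k: "pvar_control p x a b / \<gamma> powr p < real k"
    using reals_Archimedean2 by blast
  have "\<tau> (Suc k) = b"
  proof (rule ccontr)
    assume "\<tau> (Suc k) \<noteq> b"
    then have "real (Suc k) * \<gamma> powr p \<le> pvar_control p x a b"
      using progress[of "Suc k"] pvar_control_mono[OF fp, of a "\<tau> (Suc k)"] greedy_tau_bounds[of "Suc k"] ab
      by (auto simp: \<tau>_def)
    moreover have "0 < \<gamma> powr p" using \<gamma> by simp
    then have "pvar_control p x a b < real k * \<gamma> powr p" using k by (simp add: pos_divide_less_eq)
    moreover have "real (Suc k) * \<gamma> powr p = real k * \<gamma> powr p + \<gamma> powr p"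
      by (simp add: distrib_right)
    ultimately show False using \<open>0 < \<gamma> powr p\<close> by linarith
  qed
  then have "\<exists>k. 1 \<le> k \<and> \<tau> k = b" by (intro exI[of _ "Suc k"]) simp
  from LeastI_ex[OF this] show "1 \<le> greedy_N p x a b \<gamma>" "greedy_tau p x a b \<gamma> (greedy_N p x a b \<gamma>) = b"
    unfolding greedy_N_def \<tau>_def by auto
qed

end

section \<open>The Young--Loeve estimate\<close>

definition left_riemann_sum :: "(real \<Rightarrow> real^'m^'d) \<Rightarrow> (real \<Rightarrow> real^'m) \<Rightarrow> nat \<Rightarrow> (nat \<Rightarrow> real) \<Rightarrow> real^'d" where
  "left_riemann_sum F x n \<tau> = partition_sum (\<lambda>u v. F u *v (x v - x u)) n \<tau>"

definition delete_point :: "nat \<Rightarrow> (nat \<Rightarrow> real) \<Rightarrow> nat \<Rightarrow> real" where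
  "delete_point k \<tau> = (\<lambda>i. if i < k then \<tau> i else \<tau> (Suc i))"

text \<open>The term \<open>j = 0\<close> vanishes, since \<open>0 powr _ = 0\<close>.\<close>
definition zeta_sum :: "real \<Rightarrow> nat \<Rightarrow> real" where
  "zeta_sum \<theta> n = (\<Sum>j<n. real j powr (-\<theta>))"

lemma partition_of_delete_point:
  assumes P: "partition_of s t n \<tau>" and k: "Suc (Suc k) \<le> n"
  shows "partition_of s t (n - 1) (delete_point (Suc k) \<tau>)"
  unfolding partition_of_def
proof (intro conjI allI impI)
  fix i assume "i < n - 1"
  then show "delete_point (Suc k) \<tau> i < delete_point (Suc k) \<tau> (Suc i)"
    using P partition_of_less[OF P, of k "Suc (Suc k)"] k
    by (cases "i = k") (auto simp: delete_point_def partition_of_def)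
qed (use P k in \<open>auto simp: delete_point_def partition_of_def\<close>)

lemma left_riemann_sum_delete_point:
  assumes k: "Suc (Suc k) \<le> n"
  shows "left_riemann_sum F x n \<tau> = left_riemann_sum F x (n - 1) (delete_point (Suc k) \<tau>)
     + (F (\<tau> (Suc k)) - F (\<tau> k)) *v (x (\<tau> (Suc (Suc k))) - x (\<tau> (Suc k)))"
proof -
  define r where "r = n - Suc (Suc k)"
  have n: "n = k + Suc (Suc r)" "n - 1 = k + Suc r" using k by (simp_all add: r_def)
  let ?\<phi> = "\<lambda>u v. F u *v (x v - x u)"
  let ?rest = "\<Sum>i<r. ?\<phi> (\<tau> (Suc (Suc k) + i)) (\<tau> (Suc (Suc (Suc k) + i)))"
  have e1: "left_riemann_sum F x n \<tau> = (\<Sum>i<k. ?\<phi> (\<tau> i) (\<tau> (Suc i))) + ?\<phi> (\<tau> k) (\<tau> (Suc k))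
      + ?\<phi> (\<tau> (Suc k)) (\<tau> (Suc (Suc k))) + ?rest"
    unfolding left_riemann_sum_def partition_sum_def n(1) sum_lessThan_add sum.lessThan_Suc_shift
    by (simp add: add.assoc)
  have e2: "left_riemann_sum F x (n - 1) (delete_point (Suc k) \<tau>)
      = (\<Sum>i<k. ?\<phi> (\<tau> i) (\<tau> (Suc i))) + ?\<phi> (\<tau> k) (\<tau> (Suc (Suc k))) + ?rest"
    unfolding left_riemann_sum_def partition_sum_def n(2) sum_lessThan_add sum.lessThan_Suc_shift
    by (simp add: delete_point_def add.assoc)
  show ?thesis
    unfolding e1 e2 by (simp add: algebra_simps matrix_vector_mult_diff_distrib matrix_vector_mult_diff_rdistrib)
qed

lemma exists_small_product:
  fixes a b :: "nat \<Rightarrow> real"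
  assumes m: "0 < m" and nonneg: "\<And>k. k < m \<Longrightarrow> 0 \<le> a k" "\<And>k. k < m \<Longrightarrow> 0 \<le> b k"
    and A: "(\<Sum>k<m. a k) \<le> A" and B: "(\<Sum>k<m. b k) \<le> B"
  shows "\<exists>k<m. a k * b k \<le> A * B / (real m)\<^sup>2"
proof (rule ccontr)
  assume "\<not> ?thesis"
  then have big: "A * B / (real m)\<^sup>2 < a k * b k" if "k < m" for k
    using that by auto
  have "0 \<le> (\<Sum>k<m. a k)" "0 \<le> (\<Sum>k<m. b k)" using nonneg by (auto intro: sum_nonneg)
  then have AB: "0 \<le> A" "0 \<le> B" using A B by linarith+
  have "sqrt (A * B) = (\<Sum>k<m. sqrt (A * B / (real m)\<^sup>2))"
    using m by (simp add: real_sqrt_divide)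
  also have "\<dots> < (\<Sum>k<m. sqrt (a k) * sqrt (b k))"
    using m big by (intro sum_strict_mono) (auto simp flip: real_sqrt_mult)
  also have "\<dots> \<le> sqrt ((\<Sum>k<m. (sqrt (a k))\<^sup>2) * (\<Sum>k<m. (sqrt (b k))\<^sup>2))"
    by (rule real_le_rsqrt[OF Cauchy_Schwarz_ineq_sum])
  also have "\<dots> \<le> sqrt (A * B)"
    using nonneg A B AB by (auto intro!: mult_mono sum_nonneg simp: sum.cong[OF refl real_sqrt_pow2])
  finally show False by simp
qed

lemma zeta_sum_dyadic_le:
  assumes "1 < \<theta>"
  shows "zeta_sum \<theta> (2^k) \<le> (\<Sum>i<k. (2 powr (1 - \<theta>))^i)"
proof (induction k)
  case (Suc k)
  have "(\<Sum>i<(2::nat)^k. real (2^k + i) powr (-\<theta>)) \<le> (\<Sum>i<(2::nat)^k. real ((2::nat)^k) powr (-\<theta>))"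
    using assms by (intro sum_mono powr_mono2') auto
  also have "\<dots> = 2 powr real k * (2 powr real k) powr (-\<theta>)"
    by (simp add: powr_realpow)
  also have "\<dots> = (2 powr (1 - \<theta>))^k"
    by (simp add: powr_powr powr_realpow[symmetric] powr_add[symmetric] algebra_simps)
  finally have "(\<Sum>i<(2::nat)^k. real (2^k + i) powr (-\<theta>)) \<le> (2 powr (1 - \<theta>))^k" .
  moreover have "zeta_sum \<theta> (2 ^ Suc k) = zeta_sum \<theta> (2^k) + (\<Sum>i<(2::nat)^k. real (2^k + i) powr (-\<theta>))"
    unfolding zeta_sum_def mult_2[of "2^k", folded power_Suc] sum_lessThan_add by simp
  ultimately show ?case using Suc by simp
qed (simp add: zeta_sum_def)

lemma zeta_sum_le:
  assumes "1 < \<theta>"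
  shows "zeta_sum \<theta> n \<le> 1 / (1 - 2 powr (1 - \<theta>))"
proof -
  define r where "r = 2 powr (1 - \<theta>)"
  have r: "0 < r" "r < 1" using assms powr_less_mono[of "1 - \<theta>" 0 2] by (auto simp: r_def)
  have "zeta_sum \<theta> n \<le> zeta_sum \<theta> (2^n)"
    unfolding zeta_sum_def using less_exp[of n] by (intro sum_mono2) auto
  also have "\<dots> \<le> (\<Sum>i<n. r^i)" unfolding r_def by (rule zeta_sum_dyadic_le[OF assms])
  also have "\<dots> = (1 - r^n) / (1 - r)" using r by (simp add: sum_gp_strict)
  also have "\<dots> \<le> 1 / (1 - r)" using r by (intro divide_right_mono) auto
  finally show ?thesis unfolding r_def .
qed

lemma K_const_pos: "0 < p \<Longrightarrow> p < 2 \<Longrightarrow> 0 < K_const p"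
  using powr_less_mono[of "1 - 2 / p" 0 2] by (simp add: K_const_def field_simps)

lemma zeta_sum_le_K_const: "0 < p \<Longrightarrow> p < 2 \<Longrightarrow> zeta_sum (2 / p) n \<le> K_const p"
  using zeta_sum_le[of "2 / p" n] by (simp add: K_const_def)

text \<open>Deleting the point \<open>\<tau> (Suc k)\<close> changes the Riemann sum by
  \<open>(F (\<tau> (Suc k)) - F (\<tau> k)) *v (x (\<tau> (Suc (Suc k))) - x (\<tau> (Suc k)))\<close>; by the Cauchy--Schwarz
  inequality some \<open>k\<close> makes this at most \<open>m powr (-2/p)\<close> times \<open>(\<omega>1 s t * \<omega>2 s t) powr (1/p)\<close>.\<close>
lemma young_loeve_delete_step:
  fixes F :: "real \<Rightarrow> real^'m^'d" and x :: "real \<Rightarrow> real^'m"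
  assumes p: "0 < p" and \<omega>1: "control_on s t \<omega>1" and \<omega>2: "control_on s t \<omega>2"
    and F: "\<And>u v. s \<le> u \<Longrightarrow> u \<le> v \<Longrightarrow> v \<le> t \<Longrightarrow> onorm (\<lambda>w. (F v - F u) *v w) \<le> \<omega>1 u v powr (1/p)"
    and x: "\<And>u v. s \<le> u \<Longrightarrow> u \<le> v \<Longrightarrow> v \<le> t \<Longrightarrow> norm (x v - x u) \<le> \<omega>2 u v powr (1/p)"
    and P: "partition_of s t (Suc m) \<tau>" and m: "0 < m"
  obtains k where "partition_of s t m (delete_point (Suc k) \<tau>)"
    "norm (left_riemann_sum F x (Suc m) \<tau> - left_riemann_sum F x m (delete_point (Suc k) \<tau>))
       \<le> real m powr (-(2/p)) * (\<omega>1 s t * \<omega>2 s t) powr (1/p)"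
proof -
  define a where "a k = \<omega>1 (\<tau> k) (\<tau> (Suc k))" for k
  define b where "b k = \<omega>2 (\<tau> (Suc k)) (\<tau> (Suc (Suc k)))" for k
  note cell = partition_of_cell[OF P]
  have a0: "0 \<le> a k" if "k < Suc m" for k
    using \<omega>1 cell[OF that] by (simp add: a_def control_on_def)
  have b0: "0 \<le> b k" if "k < m" for k
    using \<omega>2 cell[of "Suc k"] that by (simp add: b_def control_on_def)
  have "(\<Sum>k<m. a k) \<le> (\<Sum>k<Suc m. a k)" using a0[of m] by simp
  also have "\<dots> \<le> \<omega>1 s t"
    using partition_sum_le_control[OF P \<omega>1] by (simp add: a_def partition_sum_def)
  finally have sum_a: "(\<Sum>k<m. a k) \<le> \<omega>1 s t" .
  have "(\<Sum>k<m. b k) \<le> \<omega>2 (\<tau> 0) (\<tau> 1) + (\<Sum>k<m. b k)"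
    using \<omega>2 cell[of 0] by (simp add: control_on_def)
  also have "\<dots> \<le> \<omega>2 s t"
    using partition_sum_le_control[OF P \<omega>2] unfolding partition_sum_def sum.lessThan_Suc_shift
    by (simp add: b_def)
  finally have sum_b: "(\<Sum>k<m. b k) \<le> \<omega>2 s t" .
  obtain k where k: "k < m" "a k * b k \<le> \<omega>1 s t * \<omega>2 s t / (real m)\<^sup>2"
    using exists_small_product[OF m _ _ sum_a sum_b] a0 b0 by auto
  have ab: "0 \<le> a k" "0 \<le> b k" using a0 b0 k(1) by simp_all
  have "norm ((F (\<tau> (Suc k)) - F (\<tau> k)) *v (x (\<tau> (Suc (Suc k))) - x (\<tau> (Suc k))))
      \<le> onorm (\<lambda>w. (F (\<tau> (Suc k)) - F (\<tau> k)) *v w) * norm (x (\<tau> (Suc (Suc k))) - x (\<tau> (Suc k)))"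
    by (rule onorm) simp
  also have "\<dots> \<le> a k powr (1/p) * b k powr (1/p)"
    unfolding a_def b_def using cell[of k] cell[of "Suc k"] k(1)
    by (intro mult_mono F x) auto
  also have "\<dots> = (a k * b k) powr (1/p)"
    using ab by (simp add: powr_mult)
  also have "\<dots> \<le> (\<omega>1 s t * \<omega>2 s t / (real m)\<^sup>2) powr (1/p)"
    using k(2) ab p by (intro powr_mono2) auto
  also have "\<dots> = real m powr (-(2/p)) * (\<omega>1 s t * \<omega>2 s t) powr (1/p)"
  proof -
    have square: "(real m)\<^sup>2 = real m powr 2"
      using m powr_realpow[of "real m" 2] by simp
    have "((real m)\<^sup>2) powr (1/p) = real m powr (2/p)"
      unfolding square by (simp only: powr_powr) simp
    moreover have "0 \<le> \<omega>1 s t * \<omega>2 s t"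
      using \<omega>1 \<omega>2 partition_of_imp_le[OF P] by (simp add: control_on_def)
    ultimately show ?thesis by (simp add: powr_divide powr_minus_divide)
  qed
  finally have "norm ((F (\<tau> (Suc k)) - F (\<tau> k)) *v (x (\<tau> (Suc (Suc k))) - x (\<tau> (Suc k))))
      \<le> real m powr (-(2/p)) * (\<omega>1 s t * \<omega>2 s t) powr (1/p)" .
  moreover have "partition_of s t m (delete_point (Suc k) \<tau>)"
    using partition_of_delete_point[OF P, of k] k(1) by simp
  moreover have "left_riemann_sum F x (Suc m) \<tau> - left_riemann_sum F x m (delete_point (Suc k) \<tau>)
      = (F (\<tau> (Suc k)) - F (\<tau> k)) *v (x (\<tau> (Suc (Suc k))) - x (\<tau> (Suc k)))"
    using left_riemann_sum_delete_point[of k "Suc m" F x \<tau>] k(1) by simp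
  ultimately show ?thesis using that by simp
qed

lemma young_loeve_partition:
  fixes F :: "real \<Rightarrow> real^'m^'d" and x :: "real \<Rightarrow> real^'m"
  assumes p: "0 < p" and \<omega>1: "control_on s t \<omega>1" and \<omega>2: "control_on s t \<omega>2"
    and F: "\<And>u v. s \<le> u \<Longrightarrow> u \<le> v \<Longrightarrow> v \<le> t \<Longrightarrow> onorm (\<lambda>w. (F v - F u) *v w) \<le> \<omega>1 u v powr (1/p)"
    and x: "\<And>u v. s \<le> u \<Longrightarrow> u \<le> v \<Longrightarrow> v \<le> t \<Longrightarrow> norm (x v - x u) \<le> \<omega>2 u v powr (1/p)"
  shows "partition_of s t n \<tau> \<Longrightarrow>
     norm (left_riemann_sum F x n \<tau> - F s *v (x t - x s)) \<le> zeta_sum (2/p) n * (\<omega>1 s t * \<omega>2 s t) powr (1/p)"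
proof (induction n arbitrary: \<tau>)
  case 0
  then show ?case by (auto simp: left_riemann_sum_def partition_sum_def partition_of_def zeta_sum_def)
next
  case (Suc m)
  show ?case
  proof (cases "m = 0")
    case True
    then show ?thesis using Suc.prems
      by (simp add: left_riemann_sum_def partition_sum_def partition_of_def zeta_sum_def)
  next
    case False
    then obtain k where k: "partition_of s t m (delete_point (Suc k) \<tau>)"
      "norm (left_riemann_sum F x (Suc m) \<tau> - left_riemann_sum F x m (delete_point (Suc k) \<tau>))
         \<le> real m powr (-(2/p)) * (\<omega>1 s t * \<omega>2 s t) powr (1/p)"
      using young_loeve_delete_step[OF p \<omega>1 \<omega>2 F x Suc.prems] by blast
    have "norm (left_riemann_sum F x (Suc m) \<tau> - F s *v (x t - x s))
        \<le> real m powr (-(2/p)) * (\<omega>1 s t * \<omega>2 s t) powr (1/p)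
          + zeta_sum (2/p) m * (\<omega>1 s t * \<omega>2 s t) powr (1/p)"
      by (rule norm_diff_triangle_le[OF k(2) Suc.IH[OF k(1)]])
    then show ?thesis by (simp add: zeta_sum_def algebra_simps)
  qed
qed

lemma partition_of_fine_exists:
  assumes "s \<le> t" "0 < \<delta>"
  shows "\<exists>n \<tau>. partition_of s t n \<tau> \<and> (\<forall>i<n. \<tau> (Suc i) - \<tau> i < \<delta>)"
proof (cases "s = t")
  case True
  then show ?thesis using partition_of_refl[of s] by blast
next
  case False
  define n where "n = nat \<lceil>(t - s) / \<delta>\<rceil> + 1"
  have n0: "0 < n" by (simp add: n_def)
  have "(t - s) / \<delta> < real n" unfolding n_def by linarith
  then have n: "0 < n" "(t - s) / real n < \<delta>"
    using n0 assms by (simp_all add: field_simps)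
  define \<tau> where "\<tau> i = s + (t - s) * real i / real n" for i
  have "partition_of s t n \<tau>"
    using n(1) assms False unfolding partition_of_def \<tau>_def by (auto simp: field_simps)
  moreover have "\<tau> (Suc i) - \<tau> i = (t - s) / real n" for i
    using n0 unfolding \<tau>_def by (simp add: field_simps)
  ultimately show ?thesis using n(2) by (intro exI[of _ n] exI[of _ \<tau>]) auto
qed

lemma has_young_integral_left_riemann_sum:
  assumes "has_young_integral F x s t I" "0 < e"
  obtains \<delta> where "0 < \<delta>"
    "\<And>n \<tau>. partition_of s t n \<tau> \<Longrightarrow> (\<forall>i<n. \<tau> (Suc i) - \<tau> i < \<delta>) \<Longrightarrow> norm (left_riemann_sum F x n \<tau> - I) < e"
proof -
  obtain \<delta> where "0 < \<delta>" and \<delta>: "\<forall>n \<tau> \<xi>. partition_of s t n \<tau> \<and> (\<forall>i<n. \<tau> i \<le> \<xi> i \<and> \<xi> i \<le> \<tau> (Suc i))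
      \<and> (\<forall>i<n. \<tau> (Suc i) - \<tau> i < \<delta>) \<longrightarrow> norm ((\<Sum>i<n. F (\<xi> i) *v (x (\<tau> (Suc i)) - x (\<tau> i))) - I) < e"
    using assms unfolding has_young_integral_def by blast
  show ?thesis
  proof (rule that[OF \<open>0 < \<delta>\<close>])
    fix n \<tau> assume "partition_of s t n \<tau>" "\<forall>i<n. \<tau> (Suc i) - \<tau> i < \<delta>"
    then show "norm (left_riemann_sum F x n \<tau> - I) < e"
      using \<delta>[rule_format, of n \<tau> \<tau>] partition_of_cell[of s t n \<tau>]
      by (auto simp: left_riemann_sum_def partition_sum_def)
  qed
qed

text \<open>Approximate \<open>Iu\<close> and \<open>Iv\<close> by Riemann sums over a fine partition of \<open>[a, u]\<close> and over its
  concatenation with a fine partition of \<open>[u, v]\<close>: they differ by a Riemann sum over \<open>[u, v]\<close>.\<close>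
lemma has_young_integral_increment:
  assumes au: "a \<le> u" "u \<le> v"
    and Iu: "has_young_integral F x a u Iu" and Iv: "has_young_integral F x a v Iv"
    and bound: "\<And>n \<tau>. partition_of u v n \<tau> \<Longrightarrow> norm (left_riemann_sum F x n \<tau> - F u *v (x v - x u)) \<le> M"
  shows "norm (Iv - Iu - F u *v (x v - x u)) \<le> M"
proof (rule field_le_epsilon)
  fix e :: real assume e: "0 < e"
  obtain \<delta>1 where \<delta>1: "0 < \<delta>1" "\<And>n \<tau>. partition_of a u n \<tau> \<Longrightarrow> (\<forall>i<n. \<tau> (Suc i) - \<tau> i < \<delta>1)
      \<Longrightarrow> norm (left_riemann_sum F x n \<tau> - Iu) < e/2"
    using has_young_integral_left_riemann_sum[OF Iu, of "e/2"] e by auto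
  obtain \<delta>2 where \<delta>2: "0 < \<delta>2" "\<And>n \<tau>. partition_of a v n \<tau> \<Longrightarrow> (\<forall>i<n. \<tau> (Suc i) - \<tau> i < \<delta>2)
      \<Longrightarrow> norm (left_riemann_sum F x n \<tau> - Iv) < e/2"
    using has_young_integral_left_riemann_sum[OF Iv, of "e/2"] e by auto
  obtain n1 \<tau>1 where P1: "partition_of a u n1 \<tau>1" "\<forall>i<n1. \<tau>1 (Suc i) - \<tau>1 i < min \<delta>1 \<delta>2"
    using partition_of_fine_exists[OF au(1), of "min \<delta>1 \<delta>2"] \<delta>1 \<delta>2 by auto
  obtain n2 \<tau>2 where P2: "partition_of u v n2 \<tau>2" "\<forall>i<n2. \<tau>2 (Suc i) - \<tau>2 i < min \<delta>1 \<delta>2"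
    using partition_of_fine_exists[OF au(2), of "min \<delta>1 \<delta>2"] \<delta>1 \<delta>2 by auto
  define \<tau> where "\<tau> = join_partition n1 \<tau>1 \<tau>2"
  have join: "\<tau>1 n1 = \<tau>2 0" using P1 P2 by (simp add: partition_of_def)
  have P: "partition_of a v (n1 + n2) \<tau>"
    unfolding \<tau>_def by (rule partition_of_join[OF P1(1) P2(1)])
  have "\<tau> (Suc i) - \<tau> i < \<delta>2" if "i < n1 + n2" for i
    using that P1(2) P2(2) join
    by (cases "i < n1") (auto simp: \<tau>_def join_partition_def Suc_diff_le not_less)
  then have e2: "norm (left_riemann_sum F x (n1 + n2) \<tau> - Iv) < e/2"
    using \<delta>2(2)[OF P] by blast
  have e1: "norm (left_riemann_sum F x n1 \<tau>1 - Iu) < e/2"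
    using \<delta>1(2)[OF P1(1)] P1(2) by auto
  have split: "left_riemann_sum F x (n1 + n2) \<tau> = left_riemann_sum F x n1 \<tau>1 + left_riemann_sum F x n2 \<tau>2"
    unfolding left_riemann_sum_def \<tau>_def by (rule partition_sum_join[of \<tau>1 n1 \<tau>2, OF join])
  have "Iv - Iu - F u *v (x v - x u) = (Iv - left_riemann_sum F x (n1 + n2) \<tau>)
      + (left_riemann_sum F x n1 \<tau>1 - Iu) + (left_riemann_sum F x n2 \<tau>2 - F u *v (x v - x u))"
    unfolding split by (simp add: algebra_simps)
  also have "norm \<dots> \<le> norm (Iv - left_riemann_sum F x (n1 + n2) \<tau>)
      + norm (left_riemann_sum F x n1 \<tau>1 - Iu) + norm (left_riemann_sum F x n2 \<tau>2 - F u *v (x v - x u))"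
    by (intro order_trans[OF norm_triangle_ineq] add_right_mono norm_triangle_ineq)
  also have "\<dots> \<le> M + e"
    using e1 e2 bound[OF P2(1)] by (simp add: norm_minus_commute)
  finally show "norm (Iv - Iu - F u *v (x v - x u)) \<le> M + e" .
qed

section \<open>Gronwall's inequality\<close>

lemma gronwall_affine:
  fixes u :: "real \<Rightarrow> real"
  assumes ab: "a \<le> b" and r: "0 < r"
    and u: "continuous_on {a..b} u"
    and le: "\<And>t. t \<in> {a..b} \<Longrightarrow> u t \<le> \<Phi> + integral {a..t} (\<lambda>s. r * u s + c)"
  shows "\<Phi> + integral {a..b} (\<lambda>s. r * u s + c) + c / r \<le> (\<Phi> + c / r) * exp (r * (b - a))"
proof -
  define k where "k = (\<lambda>s. r * u s + c)"
  define G where "G = (\<lambda>t. \<Phi> + integral {a..t} k + c / r)"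
  define E where "E = (\<lambda>t. exp (- r * (t - a)))"
  define H' where "H' = (\<lambda>t. r * (u t - (\<Phi> + integral {a..t} k)) * E t)"
  have k: "continuous_on {a..b} k" unfolding k_def by (intro continuous_intros u)
  have deriv: "((\<lambda>t. G t * E t) has_real_derivative H' t) (at t within {a..b})" if t: "t \<in> {a..b}" for t
  proof -
    have "(G has_real_derivative k t) (at t within {a..b})"
      unfolding G_def
      using DERIV_add[OF DERIV_add[OF DERIV_const integral_has_real_derivative[OF k t]] DERIV_const] by simp
    moreover have "(E has_real_derivative E t * (- r)) (at t within {a..b})"
      unfolding E_def by (rule derivative_eq_intros | simp)+
    ultimately have "((\<lambda>t. G t * E t) has_real_derivative k t * E t + E t * (- r) * G t) (at t within {a..b})"
      by (rule DERIV_mult)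
    moreover have "k t * E t + E t * (- r) * G t = H' t"
      using r by (simp add: k_def G_def H'_def field_simps)
    ultimately show ?thesis by simp
  qed
  have H'_nonpos: "H' t \<le> 0" if "t \<in> {a..b}" for t
    using le[OF that] r by (simp add: H'_def k_def E_def mult_nonneg_nonpos mult_nonpos_nonneg)
  have "\<exists>\<xi>\<in>{a..b}. G b * E b - G a * E a = H' \<xi> * (b - a)"
    by (rule mvt_very_simple[OF ab]) (use deriv in \<open>simp add: has_field_derivative_def\<close>)
  then obtain \<xi> where \<xi>: "\<xi> \<in> {a..b}" "G b * E b - G a * E a = H' \<xi> * (b - a)" ..
  moreover have "H' \<xi> * (b - a) \<le> 0"
    using H'_nonpos[OF \<xi>(1)] ab by (simp add: mult_nonpos_nonneg)
  ultimately have "G b * E b \<le> G a * E a" by linarith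
  moreover have "E b * exp (r * (b - a)) = 1" "E a = 1"
    by (simp_all add: E_def flip: exp_add)
  ultimately have "G b \<le> G a * exp (r * (b - a))"
    by (metis mult.assoc mult.right_neutral mult_right_mono exp_ge_zero)
  then show ?thesis by (simp add: G_def k_def)
qed

locale young_equation =
  fixes p a b Cf Cg :: real
    and A :: "real^'d^'d"
    and f :: "real^'d \<Rightarrow> real^'d"
    and g :: "real^'d \<Rightarrow> real^'m^'d"
    and x :: "real \<Rightarrow> real^'m"
    and y :: "real \<Rightarrow> real^'d"
  assumes p: "1 < p" "p < 2"
    and ab: "a \<le> b"
    and Cf: "Cf > 0" "\<And>u v. norm (f u - f v) \<le> Cf * norm (u - v)"
    and Cg: "Cg > 0" "\<And>u v. onorm (\<lambda>w. (g u - g v) *v w) \<le> Cg * norm (u - v)"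
    and g_bdd: "bdd_above (range (\<lambda>u. onorm (\<lambda>w. g u *v w)))"
    and x_cont: "continuous_on {a..b} x" and x_pvar: "finite_pvar p x a b"
    and y_cont: "continuous_on {a..b} y" and y_pvar: "finite_pvar p y a b"
    and y_sol: "\<forall>t\<in>{a..b}. \<exists>I. has_young_integral (\<lambda>s. g (y s)) x a t I
                  \<and> y t = y a + integral {a..t} (\<lambda>s. A *v y s + f (y s)) + I"

begin

definition drift_lip :: real where "drift_lip = onorm (\<lambda>v. A *v v) + Cf"

definition g_sup :: real where "g_sup = (SUP u. onorm (\<lambda>w. g u *v w))"

definition drift_bound :: "real \<Rightarrow> real" where "drift_bound s = drift_lip * norm (y s) + norm (f 0)"

definition greedy_threshold :: real where "greedy_threshold = 1 / (2 * (K_const p + 1) * Cg)"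

lemma drift_lip_pos: "0 < drift_lip"
  using onorm_pos_le[of "\<lambda>v. A *v v"] Cf by (simp add: drift_lip_def)

lemma norm_g_le: "norm (g u *v w) \<le> g_sup * norm w"
proof -
  have "norm (g u *v w) \<le> onorm (\<lambda>w. g u *v w) * norm w" by (rule onorm) simp
  also have "\<dots> \<le> g_sup * norm w"
    unfolding g_sup_def by (intro mult_right_mono cSUP_upper[OF UNIV_I g_bdd]) simp
  finally show ?thesis .
qed

lemma g_sup_nonneg: "0 \<le> g_sup"
  using cSUP_upper[OF UNIV_I g_bdd] onorm_pos_le[OF matrix_vector_mul_bounded_linear]
  unfolding g_sup_def by (meson order_trans)

lemma greedy_threshold_pos: "0 < greedy_threshold"
  using K_const_pos[of p] p Cg by (simp add: greedy_threshold_def)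

lemma finite_pvar_x: "a \<le> u \<Longrightarrow> v \<le> b \<Longrightarrow> finite_pvar p x u v"
  and finite_pvar_y: "a \<le> u \<Longrightarrow> v \<le> b \<Longrightarrow> finite_pvar p y u v"
  using finite_pvar_subinterval x_pvar y_pvar by blast+

lemma drift_continuous: "continuous_on {a..b} (\<lambda>s. A *v y s + f (y s))"
proof -
  have "Cf-lipschitz_on UNIV f"
    by (rule lipschitz_onI) (use Cf in \<open>auto simp: dist_norm\<close>)
  then have "continuous_on UNIV f" by (rule lipschitz_on_continuous_on)
  then show ?thesis
    by (intro continuous_intros continuous_on_compose2[OF _ y_cont] y_cont) auto
qed

lemma norm_drift_le: "norm (A *v v + f v) \<le> drift_lip * norm v + norm (f 0)"
proof -
  have "norm (A *v v) \<le> onorm (\<lambda>v. A *v v) * norm v" by (rule onorm) simp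
  moreover have "norm (f v) \<le> Cf * norm v + norm (f 0)"
    using Cf(2)[of v 0] norm_triangle_ineq[of "f v - f 0" "f 0"] by simp
  ultimately show ?thesis
    using norm_triangle_ineq[of "A *v v" "f v"] by (simp add: drift_lip_def algebra_simps)
qed

lemma drift_bound_continuous: "continuous_on {a..b} drift_bound"
  unfolding drift_bound_def by (intro continuous_intros y_cont)

lemma drift_bound_nonneg: "0 \<le> drift_bound s"
  using drift_lip_pos by (simp add: drift_bound_def)

lemma young_integral_increment_le:
  assumes uv: "a \<le> u" "u \<le> v" "v \<le> b"
    and Iu: "has_young_integral (\<lambda>s. g (y s)) x a u Iu" and Iv: "has_young_integral (\<lambda>s. g (y s)) x a v Iv"
  shows "norm (Iv - Iu - g (y u) *v (x v - x u))
     \<le> K_const p * Cg * pvar_semi p y u v * pvar_semi p x u v"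
proof (rule has_young_integral_increment[OF uv(1,2) Iu Iv])
  fix n \<tau> assume P: "partition_of u v n \<tau>"
  let ?\<omega>y = "\<lambda>u' v'. Cg powr p * pvar_control p y u' v'"
  have root: "(Cg powr p * pvar_control p y u' v') powr (1/p) = Cg * pvar_semi p y u' v'"
    if "a \<le> u'" "u' \<le> v'" "v' \<le> b" for u' v'
    using that Cg p pvar_control_nonneg[OF finite_pvar_y]
    by (simp add: powr_scale_root pvar_semi_eq_pvar_control)
  have "norm (left_riemann_sum (\<lambda>s. g (y s)) x n \<tau> - g (y u) *v (x v - x u))
      \<le> zeta_sum (2/p) n * (?\<omega>y u v * pvar_control p x u v) powr (1/p)"
  proof (rule young_loeve_partition[OF _ _ _ _ _ P])
    show "control_on u v ?\<omega>y"
      using uv by (intro control_on_scale control_on_pvar_control finite_pvar_y) auto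
    show "control_on u v (pvar_control p x)"
      using uv by (intro control_on_pvar_control finite_pvar_x) auto
  next
    fix u' v' assume uv': "u \<le> u'" "u' \<le> v'" "v' \<le> v"
    have "onorm (\<lambda>w. (g (y v') - g (y u')) *v w) \<le> Cg * norm (y v' - y u')" by (rule Cg(2))
    also have "\<dots> \<le> Cg * pvar_semi p y u' v'"
      using norm_le_pvar_semi[OF finite_pvar_y] uv uv' p Cg by (intro mult_left_mono) auto
    finally show "onorm (\<lambda>w. (g (y v') - g (y u')) *v w) \<le> ?\<omega>y u' v' powr (1/p)"
      using root uv uv' by simp
    show "norm (x v' - x u') \<le> pvar_control p x u' v' powr (1/p)"
      using norm_le_pvar_semi[OF finite_pvar_x] uv uv' p by (simp add: pvar_semi_eq_pvar_control)
  qed (use p in simp)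
  also have "\<dots> \<le> K_const p * (?\<omega>y u v * pvar_control p x u v) powr (1/p)"
    using zeta_sum_le_K_const p by (intro mult_right_mono) auto
  also have "(?\<omega>y u v * pvar_control p x u v) powr (1/p) = Cg * pvar_semi p y u v * pvar_semi p x u v"
    using root[of u v] uv pvar_control_nonneg[OF finite_pvar_y] pvar_control_nonneg[OF finite_pvar_x] Cg p
    by (simp add: powr_mult pvar_semi_eq_pvar_control)
  finally show "norm (left_riemann_sum (\<lambda>s. g (y s)) x n \<tau> - g (y u) *v (x v - x u))
      \<le> K_const p * Cg * pvar_semi p y u v * pvar_semi p x u v"
    by (simp add: mult.assoc)
qed

lemma norm_increment_le:
  assumes uv: "a \<le> u" "u \<le> v" "v \<le> b"
  shows "norm (y v - y u) \<le> integral {u..v} drift_bound + g_sup * norm (x v - x u)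
     + K_const p * Cg * pvar_semi p y u v * pvar_semi p x u v"
proof -
  obtain Iu where Iu: "has_young_integral (\<lambda>s. g (y s)) x a u Iu"
     "y u = y a + integral {a..u} (\<lambda>s. A *v y s + f (y s)) + Iu"
    using y_sol[rule_format, of u] uv by auto
  obtain Iv where Iv: "has_young_integral (\<lambda>s. g (y s)) x a v Iv"
     "y v = y a + integral {a..v} (\<lambda>s. A *v y s + f (y s)) + Iv"
    using y_sol[rule_format, of v] uv by auto
  have drift: "continuous_on {u..v} (\<lambda>s. A *v y s + f (y s))"
    using uv by (intro continuous_on_subset[OF drift_continuous]) auto
  have "integral {a..u} (\<lambda>s. A *v y s + f (y s)) + integral {u..v} (\<lambda>s. A *v y s + f (y s))
      = integral {a..v} (\<lambda>s. A *v y s + f (y s))"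
    using uv by (intro Henstock_Kurzweil_Integration.integral_combine integrable_continuous_interval
        continuous_on_subset[OF drift_continuous]) auto
  then have decomp: "y v - y u = integral {u..v} (\<lambda>s. A *v y s + f (y s))
      + (Iv - Iu - g (y u) *v (x v - x u)) + g (y u) *v (x v - x u)"
    using Iu(2) Iv(2) by (simp add: algebra_simps)
  have "norm (y v - y u) \<le> norm (integral {u..v} (\<lambda>s. A *v y s + f (y s)))
      + norm (Iv - Iu - g (y u) *v (x v - x u)) + norm (g (y u) *v (x v - x u))"
    unfolding decomp by (rule order_trans[OF norm_triangle_ineq add_right_mono[OF norm_triangle_ineq]])
  moreover have "norm (integral {u..v} (\<lambda>s. A *v y s + f (y s))) \<le> integral {u..v} drift_bound"
  proof (rule integral_norm_bound_integral)
    show "(\<lambda>s. A *v y s + f (y s)) integrable_on {u..v}"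
      using drift by (rule integrable_continuous_interval)
    show "drift_bound integrable_on {u..v}"
      using uv by (intro integrable_continuous_interval continuous_on_subset[OF drift_bound_continuous]) auto
  qed (simp add: drift_bound_def norm_drift_le)
  moreover note young_integral_increment_le[OF uv Iu(1) Iv(1)] norm_g_le[of "y u" "x v - x u"]
  ultimately show ?thesis by linarith
qed

text \<open>By the choice of \<open>greedy_threshold\<close>, the Young--Loeve term contributes at most half of
  \<open>pvar_semi p y s t\<close>, which is then absorbed into the left-hand side.\<close>
lemma pvar_semi_block_le:
  assumes st: "a \<le> s" "s \<le> t" "t \<le> b" and small: "pvar_semi p x s t \<le> greedy_threshold"
  shows "pvar_semi p y s t \<le> 2 * (integral {s..t} drift_bound + g_sup * pvar_semi p x s t)"
proof -
  define c where "c = K_const p * Cg * greedy_threshold"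
  have c_eq: "c = K_const p / (2 * (K_const p + 1))"
    using Cg by (simp add: c_def greedy_threshold_def)
  have c: "0 \<le> c" "c \<le> 1/2"
    unfolding c_eq using K_const_pos[of p] p by (simp_all add: field_simps)
  define \<omega> where "\<omega> i = (if i = (0::nat) then (\<lambda>u v. integral {u..v} drift_bound powr p)
    else if i = 1 then (\<lambda>u v. g_sup powr p * pvar_control p x u v)
    else (\<lambda>u v. c powr p * pvar_control p y u v))" for i
  have ctrl: "control_on s t (\<omega> i)" if "i \<in> {0, 1, 2}" for i
    using that st p g_sup_nonneg c drift_bound_nonneg
    by (auto simp: \<omega>_def intro!: control_on_integral_powr control_on_scale control_on_pvar_control
        finite_pvar_x finite_pvar_y continuous_on_subset[OF drift_bound_continuous])
  have root: "(\<Sum>i\<in>{0, 1, 2}. \<omega> i u v powr (1/p))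
      = integral {u..v} drift_bound + g_sup * pvar_semi p x u v + c * pvar_semi p y u v"
    if "a \<le> u" "u \<le> v" "v \<le> b" for u v
    using that p g_sup_nonneg c drift_bound_nonneg pvar_control_nonneg[OF finite_pvar_x] pvar_control_nonneg[OF finite_pvar_y]
      integral_nonneg[OF integrable_continuous_interval[OF continuous_on_subset[OF drift_bound_continuous]], of u v]
    by (simp add: \<omega>_def powr_scale_root powr_powr pvar_semi_eq_pvar_control)
  have "norm (y v - y u) \<le> (\<Sum>i\<in>{0, 1, 2}. \<omega> i u v powr (1/p))" if uv: "s \<le> u" "u \<le> v" "v \<le> t" for u v
  proof -
    have "pvar_semi p x u v \<le> greedy_threshold"
      using pvar_semi_mono[OF finite_pvar_x, of s t u v] st uv p small by simp
    then have "K_const p * Cg * pvar_semi p y u v * pvar_semi p x u v \<le> K_const p * Cg * pvar_semi p y u v * greedy_threshold"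
      using K_const_pos[of p] p Cg pvar_semi_nonneg[of p y u v] by (intro mult_left_mono) auto
    then have "K_const p * Cg * pvar_semi p y u v * pvar_semi p x u v \<le> c * pvar_semi p y u v"
      by (simp add: c_def ac_simps)
    moreover have "g_sup * norm (x v - x u) \<le> g_sup * pvar_semi p x u v"
      using norm_le_pvar_semi[OF finite_pvar_x] st uv p by (intro mult_left_mono g_sup_nonneg) auto
    ultimately show ?thesis
      using norm_increment_le[of u v] root[of u v] st uv by linarith
  qed
  then have "pvar_control p y s t powr (1/p) \<le> (\<Sum>i\<in>{0, 1, 2}. \<omega> i s t powr (1/p))"
    using p st by (intro pvar_control_root_le_sum_controls ctrl) auto
  then have "pvar_semi p y s t \<le> integral {s..t} drift_bound + g_sup * pvar_semi p x s t + c * pvar_semi p y s t"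
    using root[of s t] st by (simp add: pvar_semi_eq_pvar_control)
  moreover have "c * pvar_semi p y s t \<le> 1/2 * pvar_semi p y s t"
    using c pvar_semi_nonneg by (intro mult_right_mono) auto
  ultimately show ?thesis unfolding distrib_left by linarith
qed

abbreviation greedy :: "nat \<Rightarrow> real" where
  "greedy \<equiv> greedy_tau p x a b greedy_threshold"

lemma greedy_facts:
  "a \<le> greedy k" "greedy k \<le> b" "greedy k \<le> greedy (Suc k)"
  "pvar_semi p x (greedy k) (greedy (Suc k)) \<le> greedy_threshold"
  "1 \<le> greedy_N p x a b greedy_threshold" "greedy (greedy_N p x a b greedy_threshold) = b"
  using greedy_tau_bounds[OF x_cont x_pvar _ ab greedy_threshold_pos, of k] greedy_tau_le_Suc[OF x_cont x_pvar _ ab greedy_threshold_pos, of k]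
    pvar_semi_greedy_cell_le[OF x_cont x_pvar _ ab greedy_threshold_pos, of k] greedy_N_reaches_end[OF x_cont x_pvar _ ab greedy_threshold_pos] p
  by auto

lemma pvar_semi_le_greedy:
  "a \<le> t \<Longrightarrow> t \<le> greedy k \<Longrightarrow>
    pvar_semi p y a t \<le> 2 * integral {a..t} drift_bound + 2 * g_sup * real k * pvar_semi p x a b"
proof (induction k arbitrary: t)
  case 0
  then show ?case by simp
next
  case (Suc k)
  have X: "0 \<le> g_sup * pvar_semi p x a b" by (simp add: g_sup_nonneg pvar_semi_nonneg)
  show ?case
  proof (cases "t \<le> greedy k")
    case True
    then have "pvar_semi p y a t \<le> 2 * integral {a..t} drift_bound + 2 * g_sup * real k * pvar_semi p x a b"
      using Suc.IH[of t] Suc.prems(1) by simp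
    then show ?thesis using X by (simp add: algebra_simps)
  next
    case False
    note greedy = greedy_facts(1-4)[of k]
    have t: "a \<le> greedy k" "greedy k \<le> t" "t \<le> greedy (Suc k)" "greedy (Suc k) \<le> b"
      using False Suc.prems greedy greedy_facts(2)[of "Suc k"] by auto
    have "pvar_semi p y a t \<le> pvar_semi p y a (greedy k) + pvar_semi p y (greedy k) t"
      unfolding pvar_semi_eq_pvar_control using t p
      by (intro pvar_control_root_triangle finite_pvar_y) auto
    moreover have "pvar_semi p y a (greedy k) \<le> 2 * integral {a..greedy k} drift_bound + 2 * g_sup * real k * pvar_semi p x a b"
      using Suc.IH t by simp
    moreover have "pvar_semi p x (greedy k) t \<le> greedy_threshold"
      using pvar_semi_mono[OF finite_pvar_x, of "greedy k" "greedy (Suc k)" "greedy k" t] greedy t p by auto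
    then have "pvar_semi p y (greedy k) t \<le> 2 * (integral {greedy k..t} drift_bound + g_sup * pvar_semi p x (greedy k) t)"
      using t by (intro pvar_semi_block_le) auto
    moreover have "g_sup * pvar_semi p x (greedy k) t \<le> g_sup * pvar_semi p x a b"
      using pvar_semi_mono[OF x_pvar, of "greedy k" t] t p by (intro mult_left_mono g_sup_nonneg) auto
    moreover have "integral {a..greedy k} drift_bound + integral {greedy k..t} drift_bound = integral {a..t} drift_bound"
      using t by (intro Henstock_Kurzweil_Integration.integral_combine integrable_continuous_interval
          continuous_on_subset[OF drift_bound_continuous]) auto
    ultimately show ?thesis by (simp add: algebra_simps)
  qed
qed

lemma pvar_norm_le:
  defines "N \<equiv> real (greedy_N p x a b greedy_threshold)"
  shows "pvar_norm p y a b
    \<le> (norm (y a) + max (norm (f 0) / drift_lip) (2 * g_sup) * (1 + pvar_semi p x a b) * N)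
      * exp (2 * drift_lip * (b - a)) * N powr ((p - 1) / p)"
proof -
  define X where "X = pvar_semi p x a b"
  define M where "M = max (norm (f 0) / drift_lip) (2 * g_sup)"
  define \<Phi> where "\<Phi> = norm (y a) + 2 * g_sup * N * X"
  have N: "1 \<le> N" using greedy_facts(5) by (simp add: N_def)
  have c: "0 \<le> norm (f 0) / drift_lip" using drift_lip_pos by simp
  have X: "0 \<le> X" by (simp add: X_def pvar_semi_nonneg)
  have double: "integral {a..t} (\<lambda>s. 2 * drift_lip * norm (y s) + 2 * norm (f 0)) = 2 * integral {a..t} drift_bound" for t
    by (simp add: drift_bound_def algebra_simps flip: integral_mult_right)
  have chain: "pvar_semi p y a t \<le> 2 * integral {a..t} drift_bound + 2 * g_sup * N * X" if "a \<le> t" "t \<le> b" for t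
    using pvar_semi_le_greedy[of t "greedy_N p x a b greedy_threshold"] that greedy_facts(6) by (simp add: N_def X_def)
  have "norm (y t) \<le> \<Phi> + integral {a..t} (\<lambda>s. 2 * drift_lip * norm (y s) + 2 * norm (f 0))" if "t \<in> {a..b}" for t
    using chain[of t] norm_le_pvar_semi[OF finite_pvar_y, of a t] norm_triangle_sub[of "y t" "y a"] that p
    by (simp add: double \<Phi>_def)
  then have gronwall: "\<Phi> + 2 * integral {a..b} drift_bound + norm (f 0) / drift_lip
      \<le> (\<Phi> + norm (f 0) / drift_lip) * exp (2 * drift_lip * (b - a))"
    using gronwall_affine[OF ab _ continuous_on_norm[OF y_cont], of "2 * drift_lip" \<Phi> "2 * norm (f 0)"] drift_lip_pos
    by (simp add: double)
  have \<Phi>_le: "\<Phi> + norm (f 0) / drift_lip \<le> norm (y a) + M * (1 + X) * N"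
  proof -
    have "norm (f 0) / drift_lip \<le> M * 1" "0 \<le> M" using c by (auto simp: M_def)
    then have "norm (f 0) / drift_lip \<le> M * N" using N by (metis mult_left_mono order_trans)
    moreover have "2 * g_sup * N * X \<le> M * N * X" using N X by (intro mult_right_mono) (auto simp: M_def)
    ultimately show ?thesis by (simp add: \<Phi>_def algebra_simps)
  qed
  have "pvar_norm p y a b \<le> \<Phi> + 2 * integral {a..b} drift_bound"
    using chain[of b] ab by (simp add: pvar_norm_def \<Phi>_def)
  also have "\<dots> \<le> (\<Phi> + norm (f 0) / drift_lip) * exp (2 * drift_lip * (b - a))"
    using gronwall c by linarith
  also have "\<dots> \<le> (norm (y a) + M * (1 + X) * N) * exp (2 * drift_lip * (b - a))"
    using \<Phi>_le by (intro mult_right_mono) auto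
  also have "\<dots> \<le> (norm (y a) + M * (1 + X) * N) * exp (2 * drift_lip * (b - a)) * N powr ((p - 1) / p)"
  proof -
    have "1 \<le> N powr ((p - 1) / p)" using N p by (intro ge_one_powr_ge_zero) auto
    moreover have "0 \<le> M" using c by (simp add: M_def)
    then have "0 \<le> (norm (y a) + M * (1 + X) * N) * exp (2 * drift_lip * (b - a))" using N X by simp
    ultimately show ?thesis by (metis mult_left_mono mult.right_neutral)
  qed
  finally show ?thesis by (simp add: M_def X_def)
qed

end

text \<open>The differentiability of \<open>g\<close> (hypothesis \<open>Dg\<close>) matters for existence and uniqueness of the
  solution, not for this a priori bound.\<close>
theorem corollary2p4:
  fixes p a b Cf Cg :: real
    and A :: "real^'d^'d"
    and f :: "real^'d \<Rightarrow> real^'d"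
    and g :: "real^'d \<Rightarrow> real^'m^'d"
    and x :: "real \<Rightarrow> real^'m"
    and y :: "real \<Rightarrow> real^'d"
  assumes p: "1 < p" "p < 2"
    and ab: "a \<le> b"
    and Cf: "Cf > 0" "\<And>u v. norm (f u - f v) \<le> Cf * norm (u - v)"
    and Cg: "Cg > 0" "\<And>u v. onorm (\<lambda>w. (g u - g v) *v w) \<le> Cg * norm (u - v)"
    and Dg: "\<exists>Dg. (\<forall>u. (g has_derivative Dg u) (at u))
               \<and> (\<exists>C. \<forall>u v. onorm (\<lambda>w. Dg u w - Dg v w) \<le> C * norm (u - v))"
    and g_bdd: "bdd_above (range (\<lambda>u. onorm (\<lambda>w. g u *v w)))"
    and x_cont: "continuous_on {a..b} x" and x_pvar: "finite_pvar p x a b"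
    and y_cont: "continuous_on {a..b} y" and y_pvar: "finite_pvar p y a b"
    and y_sol: "\<forall>t\<in>{a..b}. \<exists>I. has_young_integral (\<lambda>s. g (y s)) x a t I
                  \<and> y t = y a + integral {a..t} (\<lambda>s. A *v y s + f (y s)) + I"
  shows "let L = onorm (\<lambda>v. A *v v) + Cf;
             g_sup = (SUP u. onorm (\<lambda>w. g u *v w));
             \<gamma> = 1 / (2 * (K_const p + 1) * Cg);
             N = real (greedy_N p x a b \<gamma>)
         in pvar_norm p y a b
            \<le> (norm (y a) + max (norm (f 0) / L) (2 * g_sup) * (1 + pvar_semi p x a b) * N)
              * exp (2 * L * (b - a)) * N powr ((p - 1) / p)"
proof -
  interpret young_equation p a b Cf Cg A f g x y
    using p ab Cf Cg g_bdd x_cont x_pvar y_cont y_pvar y_sol by unfold_locales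
  show ?thesis
    using pvar_norm_le by (simp add: Let_def drift_lip_def g_sup_def greedy_threshold_def)
qed

end
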